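(* In the two-type population dependent branching process with parameters $p\in(0,1]$, $q\in[0,1]$, let $Z(t)=p\,n_B(t)-(1-p)\,n_A(t)$. Then $\{Z(t)\}_{t\ge0}$ is a martingale (with respect to the natural filtration) and $e^{-t}Z(t)\to 0$ almost surely. Consequently $e^{-t}n_B(t)\to(1-p)W/p$ almost surely, where $W$ is the almost sure limit of $e^{-t}n_A(t)$ as $t\to\infty$ (a strictly positive finite random variable).
   Context: Population dependent branching process: a continuous-time Markov process started at time $0$ with two individuals, one of type $A$ and one of type $B$; individuals live forever. Let $n_A(t), n_B(t)$ be the numbers of type $A$, $B$ individuals at time $t$ ($n_A(0)=n_B(0)=1$). At time $t$, each type $A$ individual gives birth to type $A$ individuals at rate $q$ and to type $B$ individuals at rate $(1-p)(1-q)/p$; each type $B$ individual gives birth to type $A$ individuals at rate $\frac{n_A(t)}{n_B(t)}(1-q)$ and to type $B$ individuals at rate $\frac{n_A(t)}{n_B(t)}\cdot\frac{q(1-p)}{p}$. *)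

theory Defs
  imports "HOL-Probability.Probability"
begin

text \<open>The process is realised by the standard
  jump-chain / holding-time construction of a continuous-time Markov chain from
  i.i.d. Exp(1) variables E k (holding times) and i.i.d. Uniform[0,1] variables U k
  (choice of the jump), all independent.\<close>

text \<open>Total rate at which a new type A individual is born in state s:
  each A gives birth to A at rate q, each B gives birth to A at rate (n_A/n_B)(1-q).\<close>
definition rate_A :: "real \<Rightarrow> real \<Rightarrow> nat \<times> nat \<Rightarrow> real" where
  "rate_A p q s = real (fst s) * q + real (snd s) * (real (fst s) / real (snd s) * (1 - q))"

text \<open>Total rate at which a new type B individual is born in state s:
  each A gives birth to B at rate (1-p)(1-q)/p, each B at rate (n_A/n_B) q (1-p)/p.\<close>
definition rate_B :: "real \<Rightarrow> real \<Rightarrow> nat \<times> nat \<Rightarrow> real" where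
  "rate_B p q s = real (fst s) * ((1 - p) * (1 - q) / p)
                 + real (snd s) * (real (fst s) / real (snd s) * (q * (1 - p) / p))"

definition total_rate :: "real \<Rightarrow> real \<Rightarrow> nat \<times> nat \<Rightarrow> real" where
  "total_rate p q s = rate_A p q s + rate_B p q s"

fun jump_chain :: "real \<Rightarrow> real \<Rightarrow> (nat \<Rightarrow> 'a \<Rightarrow> real) \<Rightarrow> 'a \<Rightarrow> nat \<Rightarrow> nat \<times> nat" where
  "jump_chain p q U \<omega> 0 = (1, 1)"
| "jump_chain p q U \<omega> (Suc k) =
     (let s = jump_chain p q U \<omega> k in
      if U k \<omega> < rate_A p q s / total_rate p q s then (fst s + 1, snd s) else (fst s, snd s + 1))"

definition jump_time :: "real \<Rightarrow> real \<Rightarrow> (nat \<Rightarrow> 'a \<Rightarrow> real) \<Rightarrow> (nat \<Rightarrow> 'a \<Rightarrow> real) \<Rightarrow> 'a \<Rightarrow> nat \<Rightarrow> real" where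
  "jump_time p q E U \<omega> k = (\<Sum>j<k. E j \<omega> / total_rate p q (jump_chain p q U \<omega> j))"

text \<open>The process (n_A(t), n_B(t)); after a (probability zero) explosion it is set to (0,0).\<close>
definition pdbp :: "real \<Rightarrow> real \<Rightarrow> (nat \<Rightarrow> 'a \<Rightarrow> real) \<Rightarrow> (nat \<Rightarrow> 'a \<Rightarrow> real) \<Rightarrow> real \<Rightarrow> 'a \<Rightarrow> nat \<times> nat" where
  "pdbp p q E U t \<omega> =
     (if \<exists>k. t < jump_time p q E U \<omega> (Suc k)
      then jump_chain p q U \<omega> (LEAST k. t < jump_time p q E U \<omega> (Suc k))
      else (0, 0))"

definition nA :: "real \<Rightarrow> real \<Rightarrow> (nat \<Rightarrow> 'a \<Rightarrow> real) \<Rightarrow> (nat \<Rightarrow> 'a \<Rightarrow> real) \<Rightarrow> real \<Rightarrow> 'a \<Rightarrow> nat" where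
  "nA p q E U t \<omega> = fst (pdbp p q E U t \<omega>)"

definition nB :: "real \<Rightarrow> real \<Rightarrow> (nat \<Rightarrow> 'a \<Rightarrow> real) \<Rightarrow> (nat \<Rightarrow> 'a \<Rightarrow> real) \<Rightarrow> real \<Rightarrow> 'a \<Rightarrow> nat" where
  "nB p q E U t \<omega> = snd (pdbp p q E U t \<omega>)"

definition natural_filtration :: "'a measure \<Rightarrow> (real \<Rightarrow> 'a \<Rightarrow> 'b) \<Rightarrow> real \<Rightarrow> 'a measure" where
  "natural_filtration M X t =
     sigma (space M) {X r -` A \<inter> space M | r A. 0 \<le> r \<and> r \<le> t}"

definition ct_martingale :: "'a measure \<Rightarrow> (real \<Rightarrow> 'a measure) \<Rightarrow> (real \<Rightarrow> 'a \<Rightarrow> real) \<Rightarrow> bool" where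
  "ct_martingale M F Z \<longleftrightarrow>
     (\<forall>t\<ge>0. subalgebra M (F t) \<and> integrable M (Z t) \<and> Z t \<in> borel_measurable (F t)) \<and>
     (\<forall>s t. 0 \<le> s \<and> s \<le> t \<longrightarrow> sets (F s) \<subseteq> sets (F t)) \<and>
     (\<forall>s t. 0 \<le> s \<and> s \<le> t \<longrightarrow> (AE \<omega> in M. real_cond_exp M (F s) (Z t) \<omega> = Z s \<omega>))"

end

theory Submission
  imports Defs "HOL-Real_Asymp.Real_Asymp"
begin

text \<open>
  While both types are present, a birth is of type A with probability rate_A / total_rate = p,
  whatever n_A, n_B and q are, and the total rate is n_A / p. So the jump chain is driven by the
  i.i.d. Bernoulli(p) indicators [U_k < p]: after k jumps there are a_k = 1 + #{j < k. U_j < p}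
  individuals of type A and k + 2 - a_k of type B, and the k-th holding time is p E_k / a_k.
  The balance Z = p n_B - (1 - p) n_A changes by p - [U_k < p] at the jump decided by U_k; this
  increment is centred and independent of everything that determines whether that jump falls
  into a given time interval, which makes Z a martingale.

  Almost surely the centred partial sums of the [U_k < p] and of the E_k are O(k^(3/4))
  (Hoeffding resp. Chernoff bounds and Borel-Cantelli). Then a_k grows linearly, and Abel
  summation shows that ln a_k minus the time of the k-th jump converges; W is the exponential of
  the limit. Since Z_k / a_k tends to 0, the limit of e^(-t) n_B follows from that of e^(-t) n_A.
\<close>

section \<open>The embedded jump chain\<close>

text \<open>A sample stores the holding variable E k at Inl k and the choice variable U k at Inr k.\<close>
type_synonym sample = "nat + nat \<Rightarrow> real"

definition A_birth :: "real \<Rightarrow> sample \<Rightarrow> nat \<Rightarrow> real" where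
  "A_birth p x k = (if x (Inr k) < p then 1 else 0)"

definition births :: "real \<Rightarrow> sample \<Rightarrow> nat \<Rightarrow> nat" where
  "births p x k = (\<Sum>j<k. if x (Inr j) < p then 1 else 0)"

definition chain :: "real \<Rightarrow> sample \<Rightarrow> nat \<Rightarrow> nat \<times> nat" where
  "chain p x k = (Suc (births p x k), Suc k - births p x k)"

definition chain_nA :: "real \<Rightarrow> sample \<Rightarrow> nat \<Rightarrow> real" where
  "chain_nA p x k = real (Suc (births p x k))"

definition epoch :: "real \<Rightarrow> sample \<Rightarrow> nat \<Rightarrow> real" where
  "epoch p x k = (\<Sum>j<k. p * x (Inl j) / chain_nA p x j)"

definition jump_count :: "real \<Rightarrow> real \<Rightarrow> sample \<Rightarrow> nat" where
  "jump_count p t x = (LEAST k. t < epoch p x (Suc k))"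

definition population :: "real \<Rightarrow> real \<Rightarrow> sample \<Rightarrow> nat \<times> nat" where
  "population p t x =
     (if \<exists>k. t < epoch p x (Suc k) then chain p x (jump_count p t x) else (0, 0))"

definition sample_of :: "(nat \<Rightarrow> 'a \<Rightarrow> real) \<Rightarrow> (nat \<Rightarrow> 'a \<Rightarrow> real) \<Rightarrow> 'a \<Rightarrow> sample" where
  "sample_of E U \<omega> = (\<lambda>i. case i of Inl k \<Rightarrow> E k \<omega> | Inr k \<Rightarrow> U k \<omega>)"

definition balance :: "real \<Rightarrow> nat \<times> nat \<Rightarrow> real" where
  "balance p s = p * real (snd s) - (1 - p) * real (fst s)"

lemma sample_of_Inl [simp]: "sample_of E U \<omega> (Inl k) = E k \<omega>"
  and sample_of_Inr [simp]: "sample_of E U \<omega> (Inr k) = U k \<omega>"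
  by (simp_all add: sample_of_def)

lemma births_0 [simp]: "births p x 0 = 0"
  by (simp add: births_def)

lemma births_Suc: "births p x (Suc k) = births p x k + (if x (Inr k) < p then 1 else 0)"
  by (simp add: births_def)

lemma births_le: "births p x k \<le> k"
  by (induction k) (auto simp: births_Suc)

lemma chain_nA_ge_1: "1 \<le> chain_nA p x k"
  by (simp add: chain_nA_def)

lemma chain_nA_pos: "0 < chain_nA p x k"
  by (simp add: chain_nA_def)

lemma chain_nA_le: "chain_nA p x k \<le> real k + 1"
  using births_le[of p x k] by (simp add: chain_nA_def)

lemma chain_nA_Suc: "chain_nA p x (Suc k) = chain_nA p x k + A_birth p x k"
  by (simp add: chain_nA_def A_birth_def births_Suc)

lemma chain_nA_eq_sum: "chain_nA p x k = 1 + (\<Sum>j<k. A_birth p x j)"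
  by (induction k) (simp_all add: chain_nA_Suc, simp add: chain_nA_def)

lemma epoch_0 [simp]: "epoch p x 0 = 0"
  by (simp add: epoch_def)

lemma epoch_Suc: "epoch p x (Suc k) = epoch p x k + p * x (Inl k) / chain_nA p x k"
  by (simp add: epoch_def)

lemma epoch_mono:
  assumes "0 \<le> p" "\<And>j. 0 \<le> x (Inl j)" "m \<le> n"
  shows "epoch p x m \<le> epoch p x n"
proof -
  have "epoch p x k \<le> epoch p x (Suc k)" for k
    using assms chain_nA_pos[of p x k] by (simp add: epoch_Suc)
  then show ?thesis using assms(3) by (rule lift_Suc_mono_le)
qed

lemma balance_chain: "balance p (chain p x k) = p * (real k + 2) - chain_nA p x k"
  using births_le[of p x k] by (simp add: balance_def chain_def chain_nA_def of_nat_diff algebra_simps)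

lemma balance_chain_Suc:
  "balance p (chain p x (Suc k)) - balance p (chain p x k) = p - A_birth p x k"
  by (simp add: balance_chain chain_nA_Suc algebra_simps)

lemma abs_balance_chain_le:
  assumes "0 \<le> p" "p \<le> 1"
  shows "\<bar>balance p (chain p x k)\<bar> \<le> real k + 2"
proof -
  have "p * (real k + 2) \<le> real k + 2" "0 \<le> p * (real k + 2)"
    using assms by (auto intro: mult_left_le_one_le)
  then show ?thesis
    using chain_nA_ge_1[of p x k] chain_nA_le[of p x k]
    unfolding balance_chain abs_le_iff by linarith
qed

lemma rate_A_over_total_rate:
  assumes "0 < p" "1 \<le> a" "1 \<le> b"
  shows "total_rate p q (a, b) = real a / p" and "rate_A p q (a, b) / total_rate p q (a, b) = p"
proof -
  have rA: "rate_A p q (a, b) = real a"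
    using assms by (simp add: rate_A_def field_simps)
  have "rate_B p q (a, b) = real a * (1 - p) / p"
    using assms by (simp add: rate_B_def field_simps)
  then show total: "total_rate p q (a, b) = real a / p"
    using assms by (simp add: total_rate_def rA field_simps)
  show "rate_A p q (a, b) / total_rate p q (a, b) = p"
    using assms by (simp add: total rA)
qed

lemma jump_chain_eq_chain:
  assumes "0 < p"
  shows "jump_chain p q U \<omega> k = chain p (sample_of E U \<omega>) k"
proof (induction k)
  case 0
  then show ?case by (simp add: chain_def births_def)
next
  case (Suc k)
  define x where "x = sample_of E U \<omega>"
  have "rate_A p q (chain p x k) / total_rate p q (chain p x k) = p"
    unfolding chain_def using rate_A_over_total_rate(2)[OF assms] births_le[of p x k] by simp
  then show ?case
    using births_le[of p x k] unfolding jump_chain.simps Suc x_def[symmetric] Let_def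
    by (simp add: chain_def births_Suc x_def sample_of_def Suc_diff_le)
qed

lemma jump_time_eq_epoch:
  assumes "0 < p"
  shows "jump_time p q E U \<omega> k = epoch p (sample_of E U \<omega>) k"
proof -
  define x where "x = sample_of E U \<omega>"
  have "total_rate p q (jump_chain p q U \<omega> j) = chain_nA p x j / p" for j
    unfolding jump_chain_eq_chain[OF assms, where E=E] x_def[symmetric] chain_def chain_nA_def
    using rate_A_over_total_rate(1)[OF assms] births_le[of p x j] by simp
  then show ?thesis
    unfolding jump_time_def epoch_def x_def[symmetric] using assms chain_nA_pos[of p x]
    by (intro sum.cong) (auto simp: x_def sample_of_def)
qed

lemma pdbp_eq_population:
  assumes "0 < p"
  shows "pdbp p q E U t \<omega> = population p t (sample_of E U \<omega>)"
  unfolding pdbp_def population_def jump_count_def jump_time_eq_epoch[OF assms]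
    jump_chain_eq_chain[OF assms, where E=E] by simp

lemma
  assumes "\<exists>k. t < epoch p x (Suc k)"
  shows epoch_Suc_jump_count_gt: "t < epoch p x (Suc (jump_count p t x))"
    and jump_count_le_iff: "(\<exists>i\<le>k. t < epoch p x (Suc i)) \<longleftrightarrow> jump_count p t x \<le> k"
    and population_eq_chain: "population p t x = chain p x (jump_count p t x)"
proof -
  show gt: "t < epoch p x (Suc (jump_count p t x))"
    unfolding jump_count_def using assms by (rule LeastI_ex)
  show "(\<exists>i\<le>k. t < epoch p x (Suc i)) \<longleftrightarrow> jump_count p t x \<le> k"
    using gt unfolding jump_count_def by (meson Least_le order_trans)
  show "population p t x = chain p x (jump_count p t x)"
    using assms by (simp add: population_def)
qed

lemma epoch_jump_count_le:
  assumes "0 \<le> t"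
  shows "epoch p x (jump_count p t x) \<le> t"
proof (cases "jump_count p t x")
  case (Suc m)
  then have "\<not> t < epoch p x (Suc m)"
    unfolding jump_count_def by (intro not_less_Least) simp
  then show ?thesis using Suc by simp
qed (use assms in simp)

lemma epoch_Suc_le_before_jump_count:
  "k < jump_count p t x \<Longrightarrow> epoch p x (Suc k) \<le> t"
  unfolding jump_count_def by (metis not_less not_less_Least)

section \<open>Abel summation along a linearly growing sequence\<close>

lemma summation_by_parts:
  fixes Y c :: "nat \<Rightarrow> 'a::ring"
  shows "(\<Sum>k<n. Y k * c k) =
    (\<Sum>k<n. Y k) * c n - (\<Sum>k<n. (\<Sum>j<Suc k. Y j) * (c (Suc k) - c k))"
  by (induction n) (simp_all add: algebra_simps)

lemma convergent_sum_by_parts: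
  fixes Y c :: "nat \<Rightarrow> real"
  assumes "(\<lambda>n. (\<Sum>k<n. Y k) * c n) \<longlonglongrightarrow> 0"
    and "summable (\<lambda>k. \<bar>(\<Sum>j<Suc k. Y j) * (c (Suc k) - c k)\<bar>)"
  shows "convergent (\<lambda>n. \<Sum>k<n. Y k * c k)"
proof -
  have "convergent (\<lambda>n. \<Sum>k<n. (\<Sum>j<Suc k. Y j) * (c (Suc k) - c k))"
    using summable_rabs_cancel[OF assms(2)] summable_iff_convergent by blast
  moreover have "convergent (\<lambda>n. (\<Sum>k<n. Y k) * c n)"
    using assms(1) convergentI by blast
  ultimately show ?thesis
    unfolding summation_by_parts[of Y c] by (intro convergent_diff)
qed

lemma summable_powr_3_4_over_square: "summable (\<lambda>k::nat. (real k + 1) powr (3/4) / (real k)\<^sup>2)"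
proof (rule summable_comparison_test_bigo)
  show "summable (\<lambda>n. norm (real n powr (-5/4)))"
    using summable_real_powr_iff[of "-5/4"] by simp
  show "(\<lambda>k::nat. (real k + 1) powr (3/4) / (real k)\<^sup>2) \<in> O(\<lambda>k. real k powr (-5/4))"
    by real_asymp
qed

lemma summable_inverse_square: "summable (\<lambda>k::nat. 1 / (real k)\<^sup>2)"
  using inverse_power_summable[of 2, where 'a=real] by (simp add: inverse_eq_divide)

locale linear_growth =
  fixes a :: "nat \<Rightarrow> real" and c :: real
  assumes c_pos: "0 < c"
    and ge_1: "\<And>k. 1 \<le> a k"
    and mono_step: "\<And>k. a k \<le> a (Suc k)"
    and unit_step: "\<And>k. a (Suc k) \<le> a k + 1"
    and eventually_linear: "\<forall>\<^sub>F k in sequentially. c * real k \<le> a k"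
begin

lemma pos: "0 < a k"
  using ge_1[of k] by simp

lemma at_top: "filterlim a at_top sequentially"
proof (rule filterlim_at_top_mono[OF _ eventually_linear])
  show "filterlim (\<lambda>k. c * real k) at_top sequentially"
    using c_pos by (intro filterlim_tendsto_pos_mult_at_top[OF tendsto_const] filterlim_real_sequentially)
qed

lemma eventually_inverse_square_le:
  "\<forall>\<^sub>F k in sequentially. 1 / (a k)\<^sup>2 \<le> 1 / c\<^sup>2 * (1 / (real k)\<^sup>2)"
  using eventually_linear eventually_gt_at_top[of 0]
proof eventually_elim
  case (elim k)
  have ck: "0 < c * real k" using c_pos elim(2) by simp
  then have "(c * real k)\<^sup>2 \<le> (a k)\<^sup>2" using elim(1) by (intro power_mono) auto
  then have "1 / (a k)\<^sup>2 \<le> 1 / (c * real k)\<^sup>2"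
    using ck pos[of k] elim(2) c_pos by (intro divide_left_mono mult_pos_pos) auto
  then show ?case by (simp add: power_mult_distrib)
qed

lemma summable_inverse_square_terms: "summable (\<lambda>k. 1 / (a k)\<^sup>2)"
proof (rule summable_comparison_test_ev)
  show "\<forall>\<^sub>F k in sequentially. norm (1 / (a k)\<^sup>2) \<le> 1 / c\<^sup>2 * (1 / (real k)\<^sup>2)"
    using eventually_inverse_square_le by eventually_elim simp
  show "summable (\<lambda>k. 1 / c\<^sup>2 * (1 / (real k)\<^sup>2))"
    by (intro summable_mult summable_inverse_square)
qed

lemma abs_inverse_step_le: "\<bar>1 / a (Suc k) - 1 / a k\<bar> \<le> 1 / (a k)\<^sup>2"
proof -
  have "\<bar>1 / a (Suc k) - 1 / a k\<bar> = (a (Suc k) - a k) / (a k * a (Suc k))"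
    using pos[of k] pos[of "Suc k"] mono_step[of k] by (simp add: field_simps abs_if)
  also have "\<dots> \<le> 1 / (a k * a (Suc k))"
    using pos[of k] pos[of "Suc k"] unit_step[of k] by (intro divide_right_mono) auto
  also have "\<dots> \<le> 1 / (a k * a k)"
    using pos[of k] mono_step[of k] by (intro divide_left_mono mult_left_mono) auto
  finally show ?thesis by (simp add: power2_eq_square)
qed

text \<open>Abel summation: partial sums of size O(k^(3/4)) against the weights 1 / a k, which
  decrease in steps of order 1 / k^2.\<close>
lemma convergent_weighted_sum:
  fixes Y :: "nat \<Rightarrow> real"
  assumes Y: "\<forall>\<^sub>F k in sequentially. \<bar>\<Sum>j<k. Y j\<bar> \<le> real k powr (3/4)"
  shows "convergent (\<lambda>n. \<Sum>k<n. Y k * (1 / a k))"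
proof (rule convergent_sum_by_parts)
  show "(\<lambda>n. (\<Sum>k<n. Y k) * (1 / a n)) \<longlonglongrightarrow> 0"
  proof (rule Lim_null_comparison)
    show "\<forall>\<^sub>F n in sequentially. norm ((\<Sum>k<n. Y k) * (1 / a n)) \<le> 1 / c * (real n powr (3/4) / real n)"
      using eventually_linear Y eventually_gt_at_top[of 0]
    proof eventually_elim
      case (elim n)
      have "norm ((\<Sum>k<n. Y k) * (1 / a n)) \<le> real n powr (3/4) / a n"
        using elim(2) pos[of n] by (simp add: divide_right_mono)
      also have "\<dots> \<le> real n powr (3/4) / (c * real n)"
        using elim c_pos pos[of n] by (intro divide_left_mono mult_pos_pos) auto
      finally show ?case by simp
    qed
    have "(\<lambda>n::nat. real n powr (3/4) / real n) \<longlonglongrightarrow> 0" by real_asymp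
    then show "(\<lambda>n. 1 / c * (real n powr (3/4) / real n)) \<longlonglongrightarrow> 0"
      by (intro tendsto_mult_right_zero)
  qed
  show "summable (\<lambda>k. \<bar>(\<Sum>j<Suc k. Y j) * (1 / a (Suc k) - 1 / a k)\<bar>)"
  proof (rule summable_comparison_test_ev)
    have "\<forall>\<^sub>F k in sequentially. \<bar>\<Sum>j<Suc k. Y j\<bar> \<le> real (Suc k) powr (3/4)"
      using Y by (subst eventually_sequentially_Suc)
    then show "\<forall>\<^sub>F k in sequentially. norm \<bar>(\<Sum>j<Suc k. Y j) * (1 / a (Suc k) - 1 / a k)\<bar>
        \<le> 1 / c\<^sup>2 * ((real k + 1) powr (3/4) / (real k)\<^sup>2)"
      using eventually_inverse_square_le
    proof eventually_elim
      case (elim k)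
      have "norm \<bar>(\<Sum>j<Suc k. Y j) * (1 / a (Suc k) - 1 / a k)\<bar>
          = \<bar>\<Sum>j<Suc k. Y j\<bar> * \<bar>1 / a (Suc k) - 1 / a k\<bar>" by (simp add: abs_mult)
      also have "\<dots> \<le> (real k + 1) powr (3/4) * (1 / (a k)\<^sup>2)"
        using elim(1) abs_inverse_step_le[of k] by (intro mult_mono) (auto simp: add.commute)
      also have "\<dots> \<le> (real k + 1) powr (3/4) * (1 / c\<^sup>2 * (1 / (real k)\<^sup>2))"
        using elim(2) by (intro mult_left_mono) auto
      finally show ?case by (simp add: mult_ac)
    qed
    show "summable (\<lambda>k. 1 / c\<^sup>2 * ((real k + 1) powr (3/4) / (real k)\<^sup>2))"
      by (intro summable_mult summable_powr_3_4_over_square)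
  qed
qed

lemma convergent_log_increment_error:
  "convergent (\<lambda>n. \<Sum>k<n. ln (a (Suc k)) - ln (a k) - (a (Suc k) - a k) / a k)"
  unfolding summable_iff_convergent[symmetric]
proof (rule summable_comparison_test_ev)
  have "\<forall>\<^sub>F k in sequentially. 2 \<le> a k"
    using at_top by (simp add: filterlim_at_top)
  then show "\<forall>\<^sub>F k in sequentially.
      norm (ln (a (Suc k)) - ln (a k) - (a (Suc k) - a k) / a k) \<le> 2 * (1 / (a k)\<^sup>2)"
  proof eventually_elim
    case (elim k)
    define y where "y = (a (Suc k) - a k) / a k"
    have y: "0 \<le> y" "y \<le> 1 / a k"
      unfolding y_def using pos[of k] mono_step[of k] unit_step[of k] by (auto intro: divide_right_mono)
    moreover have "1 / a k \<le> 1 / 2" using elim by (intro divide_left_mono) auto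
    ultimately have bound: "\<bar>ln (1 + y) - y\<bar> \<le> 2 * y\<^sup>2"
      by (intro abs_ln_one_plus_x_minus_x_bound) auto
    have "1 + y = a (Suc k) / a k"
      using pos[of k] by (simp add: y_def field_simps)
    then have "ln (a (Suc k)) - ln (a k) = ln (1 + y)"
      using pos[of k] pos[of "Suc k"] by (simp add: ln_div)
    then have "norm (ln (a (Suc k)) - ln (a k) - (a (Suc k) - a k) / a k) \<le> 2 * y\<^sup>2"
      using bound by (simp add: y_def)
    also have "\<dots> \<le> 2 * (1 / a k)\<^sup>2" using y by (intro mult_left_mono power_mono) auto
    finally show ?case by (simp add: power_divide)
  qed
  show "summable (\<lambda>k. 2 * (1 / (a k)\<^sup>2))"
    by (intro summable_mult summable_inverse_square_terms)
qed

lemma log_step_tendsto_0: "(\<lambda>k. ln (a (Suc k)) - ln (a k)) \<longlonglongrightarrow> 0"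
proof (rule Lim_null_comparison)
  show "\<forall>\<^sub>F k in sequentially. norm (ln (a (Suc k)) - ln (a k)) \<le> inverse (a k)"
  proof (intro always_eventually allI)
    fix k
    have "ln (a (Suc k)) - ln (a k) = ln (a (Suc k) / a k)"
      using pos[of k] pos[of "Suc k"] by (simp add: ln_div)
    also have "\<dots> \<le> a (Suc k) / a k - 1"
      using pos[of k] pos[of "Suc k"] by (intro ln_le_minus_one) simp
    also have "\<dots> = (a (Suc k) - a k) / a k"
      using pos[of k] by (simp add: field_simps)
    also have "\<dots> \<le> inverse (a k)"
      using pos[of k] unit_step[of k] by (simp add: inverse_eq_divide divide_right_mono)
    finally show "norm (ln (a (Suc k)) - ln (a k)) \<le> inverse (a k)"
      using pos[of k] mono_step[of k] by simp
  qed
  show "(\<lambda>k. inverse (a k)) \<longlonglongrightarrow> 0"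
    by (rule tendsto_inverse_0_at_top[OF at_top])
qed

end

section \<open>Pathwise asymptotics\<close>

definition nA_limit :: "real \<Rightarrow> sample \<Rightarrow> real" where
  "nA_limit p x = exp (lim (\<lambda>k. ln (chain_nA p x k) - epoch p x k))"

text \<open>Pathwise conditions that hold almost surely and suffice for all the limits.\<close>
locale regular_sample =
  fixes p :: real and x :: sample
  assumes p_pos: "0 < p" and p_le_1: "p \<le> 1"
    and holding_nonneg: "\<And>j. 0 \<le> x (Inl j)"
    and birth_deviation: "\<forall>\<^sub>F k in sequentially. \<bar>\<Sum>j<k. A_birth p x j - p\<bar> \<le> real k powr (3/4)"
    and holding_deviation: "\<forall>\<^sub>F k in sequentially. \<bar>\<Sum>j<k. x (Inl j) - 1\<bar> \<le> real k powr (3/4)"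
begin

abbreviation a :: "nat \<Rightarrow> real" where
  "a \<equiv> chain_nA p x"

definition log_gap :: "nat \<Rightarrow> real" where
  "log_gap k = ln (a k) - epoch p x k"

lemma chain_nA_eq_deviation: "a k = 1 + p * real k + (\<Sum>j<k. A_birth p x j - p)"
  by (simp add: chain_nA_eq_sum sum_subtractf)

lemma eventually_chain_nA_ge: "\<forall>\<^sub>F k in sequentially. p / 2 * real k \<le> a k"
proof -
  have "\<forall>\<^sub>F k in sequentially. real k powr (3/4) \<le> p / 2 * real k"
    using p_pos by real_asymp
  then show ?thesis using birth_deviation
    by eventually_elim (use chain_nA_eq_deviation in \<open>auto simp: abs_le_iff\<close>)
qed

sublocale linear_growth a "p / 2"
proof
  show "0 < p / 2" using p_pos by simp
  show "\<forall>\<^sub>F k in sequentially. p / 2 * real k \<le> a k" by (rule eventually_chain_nA_ge)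
qed (auto simp: chain_nA_ge_1 chain_nA_Suc A_birth_def)

lemma log_gap_step:
  "log_gap (Suc k) - log_gap k = (ln (a (Suc k)) - ln (a k) - (a (Suc k) - a k) / a k)
     + (A_birth p x k - p) * (1 / a k) + p * ((1 - x (Inl k)) * (1 / a k))"
  using pos[of k] by (simp add: log_gap_def epoch_Suc chain_nA_Suc field_simps)

lemma convergent_log_gap: "convergent log_gap"
proof -
  have births: "convergent (\<lambda>n. \<Sum>k<n. (A_birth p x k - p) * (1 / a k))"
    by (rule convergent_weighted_sum[OF birth_deviation])
  have holding: "convergent (\<lambda>n. \<Sum>k<n. (1 - x (Inl k)) * (1 / a k))"
  proof (rule convergent_weighted_sum)
    have "(\<Sum>j<k. 1 - x (Inl j)) = - (\<Sum>j<k. x (Inl j) - 1)" for k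
      by (simp add: sum_negf[symmetric])
    then show "\<forall>\<^sub>F k in sequentially. \<bar>\<Sum>j<k. 1 - x (Inl j)\<bar> \<le> real k powr (3/4)"
      using holding_deviation by simp
  qed
  have "convergent (\<lambda>n. (\<Sum>k<n. ln (a (Suc k)) - ln (a k) - (a (Suc k) - a k) / a k)
      + (\<Sum>k<n. (A_birth p x k - p) * (1 / a k)) + p * (\<Sum>k<n. (1 - x (Inl k)) * (1 / a k)))"
    (is "convergent ?S")
    by (intro convergent_add convergent_mult convergent_const convergent_log_increment_error
        births holding)
  moreover have "log_gap = ?S"
  proof
    fix n
    have "log_gap 0 = 0"
      by (simp add: log_gap_def chain_nA_def)
    then have "log_gap n = (\<Sum>k<n. log_gap (Suc k) - log_gap k)"
      by (simp add: sum_lessThan_telescope)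
    then show "log_gap n = ?S n"
      by (simp add: log_gap_step sum.distrib sum_distrib_left)
  qed
  ultimately show ?thesis by simp
qed

lemma log_gap_tendsto: "log_gap \<longlonglongrightarrow> ln (nA_limit p x)"
  using convergent_log_gap by (simp add: nA_limit_def log_gap_def[abs_def] convergent_LIMSEQ_iff)

lemma epoch_at_top: "filterlim (epoch p x) at_top sequentially"
proof -
  have "epoch p x = (\<lambda>k. - log_gap k + ln (a k))"
    by (simp add: log_gap_def fun_eq_iff)
  moreover have "filterlim (\<lambda>k. - log_gap k + ln (a k)) at_top sequentially"
    by (rule filterlim_tendsto_add_at_top[OF tendsto_minus[OF log_gap_tendsto]
          filterlim_compose[OF ln_at_top at_top]])
  ultimately show ?thesis by simp
qed

lemma non_explosive: "\<exists>k. t < epoch p x (Suc k)"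
proof -
  obtain k where "t < epoch p x k"
    using epoch_at_top by (auto simp: filterlim_at_top_dense eventually_sequentially)
  then have "t < epoch p x (Suc k)"
    using epoch_mono[of p x k "Suc k"] p_pos holding_nonneg by fastforce
  then show ?thesis ..
qed

lemma jump_count_at_top: "filterlim (\<lambda>t. jump_count p t x) at_top at_top"
  unfolding filterlim_at_top
proof
  fix n :: nat
  show "\<forall>\<^sub>F t in at_top. n \<le> jump_count p t x"
    using eventually_ge_at_top[of "epoch p x n"]
  proof eventually_elim
    case (elim t)
    have "epoch p x (Suc (jump_count p t x)) \<le> epoch p x n"
      if "Suc (jump_count p t x) \<le> n"
      using that p_pos holding_nonneg by (intro epoch_mono) auto
    then show ?case
      using epoch_Suc_jump_count_gt[OF non_explosive, of t] elim by force
  qed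
qed

text \<open>Between the k-th and the (k+1)-th jump, ln (a k) - t is squeezed between
  log_gap (Suc k) - (ln (a (Suc k)) - ln (a k)) and log_gap k.\<close>
lemma log_nA_minus_time_tendsto:
  "((\<lambda>t. ln (a (jump_count p t x)) - t) \<longlongrightarrow> ln (nA_limit p x)) at_top"
proof (rule tendsto_sandwich)
  let ?N = "\<lambda>t. jump_count p t x"
  show "\<forall>\<^sub>F t in at_top. log_gap (Suc (?N t)) - (ln (a (Suc (?N t))) - ln (a (?N t)))
      \<le> ln (a (?N t)) - t"
    using epoch_Suc_jump_count_gt[OF non_explosive]
    by (intro always_eventually allI) (simp add: log_gap_def less_imp_le)
  show "\<forall>\<^sub>F t in at_top. ln (a (?N t)) - t \<le> log_gap (?N t)"
    using eventually_ge_at_top[of "0::real"]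
    by eventually_elim (simp add: log_gap_def epoch_jump_count_le)
  have "(\<lambda>k. log_gap (Suc k) - (ln (a (Suc k)) - ln (a k))) \<longlonglongrightarrow> ln (nA_limit p x)"
    using tendsto_diff[OF LIMSEQ_Suc[OF log_gap_tendsto] log_step_tendsto_0] by simp
  then show "((\<lambda>t. log_gap (Suc (?N t)) - (ln (a (Suc (?N t))) - ln (a (?N t))))
      \<longlongrightarrow> ln (nA_limit p x)) at_top"
    by (rule filterlim_compose[OF _ jump_count_at_top])
  show "((\<lambda>t. log_gap (?N t)) \<longlongrightarrow> ln (nA_limit p x)) at_top"
    by (rule filterlim_compose[OF log_gap_tendsto jump_count_at_top])
qed

lemma nA_tendsto:
  "((\<lambda>t. exp (- t) * real (fst (population p t x))) \<longlongrightarrow> nA_limit p x) at_top"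
proof -
  have "exp (- t) * real (fst (population p t x)) = exp (ln (a (jump_count p t x)) - t)" for t
    using pos[of "jump_count p t x"] non_explosive[of t]
    by (simp add: population_eq_chain chain_def chain_nA_def exp_diff exp_minus field_simps)
  moreover have "nA_limit p x = exp (ln (nA_limit p x))"
    by (simp add: nA_limit_def)
  ultimately show ?thesis
    using tendsto_exp[OF log_nA_minus_time_tendsto] by simp
qed

lemma balance_over_nA_tendsto_0: "(\<lambda>k. balance p (chain p x k) / a k) \<longlonglongrightarrow> 0"
proof (rule Lim_null_comparison)
  show "\<forall>\<^sub>F k in sequentially.
      norm (balance p (chain p x k) / a k) \<le> 2 / p * ((1 + real k powr (3/4)) / real k)"
    using eventually_chain_nA_ge birth_deviation eventually_gt_at_top[of 0]
  proof eventually_elim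
    case (elim k)
    have "balance p (chain p x k) = 2 * p - 1 - (\<Sum>j<k. A_birth p x j - p)"
      using chain_nA_eq_deviation[of k] by (simp add: balance_chain algebra_simps)
    then have "\<bar>balance p (chain p x k)\<bar> \<le> 1 + real k powr (3/4)"
      using elim(2) p_pos p_le_1 unfolding abs_le_iff by linarith
    then have "norm (balance p (chain p x k) / a k) \<le> (1 + real k powr (3/4)) / a k"
      using pos[of k] by (simp add: divide_right_mono)
    also have "\<dots> \<le> (1 + real k powr (3/4)) / (p / 2 * real k)"
      using elim p_pos pos[of k] by (intro divide_left_mono mult_pos_pos add_nonneg_nonneg) auto
    finally show ?case using p_pos by (simp add: field_simps)
  qed
  have "(\<lambda>k::nat. (1 + real k powr (3/4)) / real k) \<longlonglongrightarrow> 0" by real_asymp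
  then show "(\<lambda>k. 2 / p * ((1 + real k powr (3/4)) / real k)) \<longlonglongrightarrow> 0"
    by (intro tendsto_mult_right_zero)
qed

lemma balance_tendsto_0:
  "((\<lambda>t. exp (- t) * balance p (population p t x)) \<longlongrightarrow> 0) at_top"
proof -
  have "exp (- t) * balance p (population p t x) =
      exp (- t) * real (fst (population p t x)) *
      (balance p (chain p x (jump_count p t x)) / a (jump_count p t x))" for t
    using non_explosive[of t] pos[of "jump_count p t x"]
    by (simp add: population_eq_chain chain_def chain_nA_def)
  then show ?thesis
    using tendsto_mult[OF nA_tendsto filterlim_compose[OF balance_over_nA_tendsto_0 jump_count_at_top]]
    by simp
qed

lemma nB_tendsto:
  "((\<lambda>t. exp (- t) * real (snd (population p t x))) \<longlongrightarrow> (1 - p) * nA_limit p x / p) at_top"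
proof -
  have "exp (- t) * real (snd (population p t x)) =
      (exp (- t) * balance p (population p t x)
        + (1 - p) * (exp (- t) * real (fst (population p t x)))) / p" for t
    using p_pos by (simp add: balance_def field_simps)
  then show ?thesis
    using tendsto_divide[OF tendsto_add[OF balance_tendsto_0 tendsto_mult[OF tendsto_const nA_tendsto]]
        tendsto_const, of p] p_pos
    by simp
qed

end

section \<open>Measurability, concentration and non-explosion\<close>

lemma chain_nA_measurable:
  assumes "\<And>l. l < k \<Longrightarrow> Inr l \<in> I"
  shows "(\<lambda>x. chain_nA p x k) \<in> borel_measurable (PiM I (\<lambda>_. borel))"
proof -
  have [measurable]: "(\<lambda>x. x (Inr l)) \<in> borel_measurable (PiM I (\<lambda>_. borel))" if "l < k" for l
    using assms[OF that] by (rule measurable_component_singleton)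
  show ?thesis
    unfolding chain_nA_eq_sum A_birth_def by measurable
qed

lemma epoch_measurable:
  assumes "\<And>l. l < k \<Longrightarrow> Inl l \<in> I" "\<And>l. Suc l < k \<Longrightarrow> Inr l \<in> I"
  shows "(\<lambda>x. epoch p x k) \<in> borel_measurable (PiM I (\<lambda>_. borel))"
proof -
  have [measurable]: "(\<lambda>x. x (Inl l)) \<in> borel_measurable (PiM I (\<lambda>_. borel))" if "l < k" for l
    using assms(1)[OF that] by (rule measurable_component_singleton)
  have [measurable]: "(\<lambda>x. chain_nA p x l) \<in> borel_measurable (PiM I (\<lambda>_. borel))" if "l < k" for l
    using that by (intro chain_nA_measurable assms(2)) simp
  show ?thesis
    unfolding epoch_def by measurable
qed

lemma chain_measurable:
  assumes "\<And>l. l < k \<Longrightarrow> Inr l \<in> I"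
  shows "(\<lambda>x. chain p x k) \<in> PiM I (\<lambda>_. borel) \<rightarrow>\<^sub>M count_space UNIV"
proof -
  have [measurable]: "(\<lambda>x. chain_nA p x k) \<in> borel_measurable (PiM I (\<lambda>_. borel))"
    using assms by (rule chain_nA_measurable)
  have "(\<lambda>x. births p x k) \<in> PiM I (\<lambda>_. borel) \<rightarrow>\<^sub>M count_space UNIV"
    unfolding measurable_count_space_eq2_countable
  proof safe
    fix n :: nat
    have "(\<lambda>x. births p x k) -` {n} \<inter> space (PiM I (\<lambda>_. borel)) =
        {x \<in> space (PiM I (\<lambda>_. borel)). chain_nA p x k = real (Suc n)}"
      by (auto simp: chain_nA_def)
    also have "\<dots> \<in> sets (PiM I (\<lambda>_. borel))" by measurable
    finally show "(\<lambda>x. births p x k) -` {n} \<inter> space (PiM I (\<lambda>_. borel)) \<in> sets (PiM I (\<lambda>_. borel))" .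
  qed simp
  then show ?thesis
    unfolding chain_def by (rule measurable_compose[OF _ measurable_count_space])
qed

lemma population_measurable:
  "population p t \<in> PiM UNIV (\<lambda>_. borel) \<rightarrow>\<^sub>M count_space UNIV"
proof -
  have [measurable]: "(\<lambda>x. epoch p x k) \<in> borel_measurable (PiM UNIV (\<lambda>_. borel))" for k
    by (rule epoch_measurable) auto
  have [measurable]: "(\<lambda>x. chain p x k) \<in> PiM UNIV (\<lambda>_. borel) \<rightarrow>\<^sub>M count_space UNIV" for k
    by (rule chain_measurable) auto
  have "jump_count p t \<in> PiM UNIV (\<lambda>_. borel) \<rightarrow>\<^sub>M count_space UNIV"
    unfolding jump_count_def[abs_def] by measurable
  then have [measurable]: "(\<lambda>x. chain p x (jump_count p t x)) \<in> PiM UNIV (\<lambda>_. borel) \<rightarrow>\<^sub>M count_space UNIV"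
    by (rule measurable_compose_countable[rotated]) simp
  show ?thesis
    unfolding population_def[abs_def] by measurable
qed

lemma epoch_ge_harmonic_weighted:
  assumes "0 \<le> p" "\<And>j. 0 \<le> x (Inl j)"
  shows "p * (\<Sum>j<k. x (Inl j) / (real j + 1)) \<le> epoch p x k"
  unfolding epoch_def sum_distrib_left
proof (intro sum_mono)
  fix j
  have "x (Inl j) / (real j + 1) \<le> x (Inl j) / chain_nA p x j"
    using assms chain_nA_pos[of p x j] chain_nA_le[of p x j] by (intro divide_left_mono) auto
  then have "p * (x (Inl j) / (real j + 1)) \<le> p * (x (Inl j) / chain_nA p x j)"
    using assms(1) by (rule mult_left_mono)
  then show "p * (x (Inl j) / (real j + 1)) \<le> p * x (Inl j) / chain_nA p x j"
    by simp
qed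

lemma exp_neg_div_one_minus_le:
  fixes \<theta> :: real
  assumes "0 < \<theta>" "\<theta> \<le> 1/3"
  shows "exp (- \<theta>) * (1 / (1 - \<theta>)) \<le> exp (\<theta>\<^sup>2)"
proof -
  have "1 + (\<theta> + \<theta>\<^sup>2) + (\<theta> + \<theta>\<^sup>2)\<^sup>2 / 2 \<le> exp (\<theta> + \<theta>\<^sup>2)"
    by (rule exp_lower_Taylor_quadratic) (use assms in simp)
  moreover have "\<theta>\<^sup>2 / 2 \<le> (\<theta> + \<theta>\<^sup>2)\<^sup>2 / 2"
    using assms by (intro divide_right_mono power_mono) auto
  ultimately have taylor: "1 + \<theta> + 3/2 * \<theta>\<^sup>2 \<le> exp (\<theta> + \<theta>\<^sup>2)" by simp
  have "(1 - \<theta>) * (1 + \<theta> + 3/2 * \<theta>\<^sup>2) = 1 + \<theta>\<^sup>2 * (1/2 - 3/2 * \<theta>)"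
    by (simp add: field_simps power2_eq_square power3_eq_cube)
  then have "1 \<le> (1 - \<theta>) * (1 + \<theta> + 3/2 * \<theta>\<^sup>2)"
    using assms by simp
  then have "1 / (1 - \<theta>) \<le> 1 + \<theta> + 3/2 * \<theta>\<^sup>2"
    using assms by (simp add: divide_simps mult.commute)
  also note taylor
  finally have "exp (- \<theta>) * (1 / (1 - \<theta>)) \<le> exp (- \<theta>) * exp (\<theta> + \<theta>\<^sup>2)"
    by (intro mult_left_mono) auto
  also have "\<dots> = exp (\<theta>\<^sup>2)" by (simp add: exp_add[symmetric])
  finally show ?thesis .
qed

lemma exp_div_one_plus_le:
  fixes \<theta> :: real
  assumes "0 < \<theta>" "\<theta> \<le> 1"
  shows "exp \<theta> * (1 / (1 + \<theta>)) \<le> exp (\<theta>\<^sup>2)"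
proof -
  define y where "y = \<theta> - \<theta>\<^sup>2"
  have "\<theta> * \<theta> \<le> \<theta>" "0 \<le> \<theta> * \<theta>" using assms by (auto intro: mult_left_le_one_le)
  then have y: "0 \<le> y" "y \<le> 1" "y \<le> \<theta>"
    using assms unfolding y_def power2_eq_square by linarith+
  have "exp y \<le> 1 + y + y\<^sup>2" by (rule exp_bound) (use y in auto)
  also have "y\<^sup>2 \<le> \<theta>\<^sup>2" using y by (intro power_mono) auto
  then have "1 + y + y\<^sup>2 \<le> 1 + \<theta>" by (simp add: y_def)
  finally have "exp \<theta> * (1 / (1 + \<theta>)) \<le> exp \<theta> * (1 / exp y)"
    using assms by (intro mult_left_mono divide_left_mono) auto
  also have "\<dots> = exp (\<theta>\<^sup>2)" by (simp add: y_def exp_diff)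
  finally show ?thesis .
qed

lemma prod_frac_telescope: "(\<Prod>j<n. (real j + 1) / (real j + 3)) = 2 / ((real n + 1) * (real n + 2))"
proof (induction n)
  case (Suc n)
  then have "(\<Prod>j<Suc n. (real j + 1) / (real j + 3)) =
      2 / ((real n + 1) * (real n + 2)) * ((real n + 1) / (real n + 3))"
    by simp
  also have "\<dots> = 2 / ((real n + 2) * (real n + 3))"
    by (simp add: frac_eq_eq add_pos_pos)
  finally show ?case by (simp add: add.commute add.left_commute)
qed simp

lemma (in prob_space) AE_eventually_abs_le:
  fixes S :: "nat \<Rightarrow> 'a \<Rightarrow> real"
  assumes [measurable]: "\<And>k. S k \<in> borel_measurable M"
    and "summable (\<lambda>k. prob {\<omega>\<in>space M. b k < \<bar>S k \<omega>\<bar>})"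
  shows "AE \<omega> in M. \<forall>\<^sub>F k in sequentially. \<bar>S k \<omega>\<bar> \<le> b k"
proof -
  have "AE \<omega> in M. \<forall>\<^sub>F k in sequentially. \<omega> \<in> space M - {\<omega>\<in>space M. b k < \<bar>S k \<omega>\<bar>}"
    using assms(2) by (intro borel_cantelli_AE1) (auto simp: emeasure_eq_measure)
  then show ?thesis
    by eventually_elim (auto elim!: eventually_mono simp: not_less)
qed

locale pdbp_setting = prob_space M for M :: "'a measure" +
  fixes p :: real and E U :: "nat \<Rightarrow> 'a \<Rightarrow> real"
  assumes p_pos: "0 < p" and p_le_1: "p \<le> 1"
    and E_distributed: "\<And>k. distributed M lborel (E k) (exponential_density 1)"
    and U_distributed: "\<And>k. distributed M lborel (U k)
          (\<lambda>x. indicator {0..1::real} x / measure lborel {0..1::real})"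
    and indep: "indep_vars (\<lambda>_. borel) (\<lambda>i. case i of Inl k \<Rightarrow> E k | Inr k \<Rightarrow> U k) UNIV"
begin

abbreviation coord :: "nat + nat \<Rightarrow> 'a \<Rightarrow> real" where
  "coord \<equiv> \<lambda>i. case i of Inl k \<Rightarrow> E k | Inr k \<Rightarrow> U k"

lemma E_measurable [measurable]: "E k \<in> borel_measurable M"
  using distributed_measurable[OF E_distributed[of k]] by (simp add: measurable_lborel1)

lemma U_measurable [measurable]: "U k \<in> borel_measurable M"
  using distributed_measurable[OF U_distributed[of k]] by (simp add: measurable_lborel1)

lemma coord_measurable [measurable]: "coord i \<in> borel_measurable M"
  by (cases i) simp_all

lemma sample_of_eq_coord: "sample_of E U \<omega> = (\<lambda>i. coord i \<omega>)"
  by (auto simp: sample_of_def fun_eq_iff split: sum.split)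

lemma sample_of_measurable [measurable]: "sample_of E U \<in> M \<rightarrow>\<^sub>M PiM UNIV (\<lambda>_. borel)"
proof -
  have "(\<lambda>\<omega>. \<lambda>i\<in>UNIV. coord i \<omega>) \<in> M \<rightarrow>\<^sub>M PiM UNIV (\<lambda>_. borel)"
    by (intro measurable_restrict) simp
  moreover have "(\<lambda>\<omega>. \<lambda>i\<in>UNIV. coord i \<omega>) = sample_of E U"
    by (simp add: sample_of_eq_coord fun_eq_iff)
  ultimately show ?thesis by simp
qed

lemma epoch_sample_measurable [measurable]: "(\<lambda>\<omega>. epoch p (sample_of E U \<omega>) k) \<in> borel_measurable M"
  by (rule measurable_compose[OF sample_of_measurable epoch_measurable]) auto

lemma population_sample_measurable:
  "(\<lambda>\<omega>. population p t (sample_of E U \<omega>)) \<in> M \<rightarrow>\<^sub>M count_space UNIV"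
  by (rule measurable_compose[OF sample_of_measurable population_measurable])

lemma AE_E_nonneg: "AE \<omega> in M. \<forall>j. 0 \<le> E j \<omega>"
proof -
  have "AE \<omega> in M. 0 \<le> E j \<omega>" for j
    using distributed_AE2[OF E_distributed[of j], of "\<lambda>x. 0 \<le> x"]
    by (simp add: exponential_density_def)
  then show ?thesis by (simp add: AE_all_countable)
qed

lemma prob_U_less: "prob {\<omega> \<in> space M. U k \<omega> < p} = p"
proof -
  have "emeasure M (U k -` {..<p} \<inter> space M) =
      (\<integral>\<^sup>+x. ennreal (indicator {0..1::real} x / measure lborel {0..1::real}) * indicator {..<p} x \<partial>lborel)"
    by (rule distributed_emeasure[OF U_distributed]) simp
  also have "\<dots> = (\<integral>\<^sup>+x. indicator {0..<p} x \<partial>lborel)"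
    using p_le_1 by (intro nn_integral_cong) (auto split: split_indicator)
  also have "\<dots> = ennreal p" using p_pos by simp
  finally have "emeasure M {\<omega> \<in> space M. U k \<omega> < p} = ennreal p"
    by (simp add: vimage_def Int_def conj_commute)
  then show ?thesis using p_pos by (simp add: emeasure_eq_measure)
qed

lemma expectation_A_birth: "expectation (\<lambda>\<omega>. A_birth p (sample_of E U \<omega>) k) = p"
proof -
  have "expectation (\<lambda>\<omega>. A_birth p (sample_of E U \<omega>) k) = expectation (indicator {\<omega> \<in> space M. U k \<omega> < p})"
    by (intro Bochner_Integration.integral_cong) (auto simp: A_birth_def indicator_def)
  then show ?thesis by (simp add: Int_absorb2 prob_U_less)
qed

lemma nn_integral_exp_E:
  assumes "-1 < c"
  shows "(\<integral>\<^sup>+\<omega>. ennreal (exp (- c * E k \<omega>)) \<partial>M) = ennreal (1 / (1 + c))"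
proof -
  have "(\<integral>\<^sup>+\<omega>. ennreal (exp (- c * E k \<omega>)) \<partial>M) =
      (\<integral>\<^sup>+x. ennreal (exponential_density 1 x) * ennreal (exp (- c * x)) \<partial>lborel)"
    by (rule distributed_nn_integral[OF E_distributed, symmetric]) simp
  also have "\<dots> = (\<integral>\<^sup>+x. ennreal (1 / (1 + c)) * ennreal (exponential_density (1 + c) x) \<partial>lborel)"
  proof (intro nn_integral_cong)
    fix x :: real
    have "exp (- x * 1) * exp (- c * x) = exp (- x * (1 + c))"
      by (simp add: exp_add[symmetric] algebra_simps)
    then show "ennreal (exponential_density 1 x) * ennreal (exp (- c * x)) =
        ennreal (1 / (1 + c)) * ennreal (exponential_density (1 + c) x)"
      using assms by (simp add: ennreal_mult'[symmetric] exponential_density_def)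
  qed
  also have "\<dots> = ennreal (1 / (1 + c)) * emeasure (density lborel (exponential_density (1 + c))) UNIV"
    by (simp add: nn_integral_cmult emeasure_density)
  also have "emeasure (density lborel (exponential_density (1 + c))) UNIV = 1"
    using prob_space.emeasure_space_1[OF prob_space_exponential_density[of "1 + c"]] assms by simp
  finally show ?thesis by simp
qed

lemma nn_integral_prod_E:
  fixes g :: "nat \<Rightarrow> real \<Rightarrow> ennreal"
  assumes J: "finite J" and [measurable]: "\<And>j. g j \<in> borel_measurable borel"
  shows "(\<integral>\<^sup>+\<omega>. (\<Prod>j\<in>J. g j (E j \<omega>)) \<partial>M) = (\<Prod>j\<in>J. \<integral>\<^sup>+\<omega>. g j (E j \<omega>) \<partial>M)"
proof -
  have "indep_vars (\<lambda>_. borel) (\<lambda>i \<omega>. g (projl i) (coord i \<omega>)) (Inl ` J)"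
    by (rule indep_vars_compose2[OF indep_vars_subset[OF indep]]) auto
  then have "(\<integral>\<^sup>+\<omega>. (\<Prod>i\<in>Inl ` J. g (projl i) (coord i \<omega>)) \<partial>M) =
      (\<Prod>i\<in>Inl ` J. \<integral>\<^sup>+\<omega>. g (projl i) (coord i \<omega>) \<partial>M)"
    by (intro indep_vars_nn_integral) (use J in auto)
  then show ?thesis
    by (simp add: prod.reindex inj_on_def)
qed

lemma Chernoff_sum_E:
  fixes h :: "nat \<Rightarrow> real \<Rightarrow> real"
  assumes J: "finite J" and "0 < \<theta>" and [measurable]: "\<And>j. h j \<in> borel_measurable borel"
  shows "emeasure M {\<omega>\<in>space M. x \<le> (\<Sum>j\<in>J. h j (E j \<omega>))}
     \<le> ennreal (exp (- \<theta> * x)) * (\<Prod>j\<in>J. \<integral>\<^sup>+\<omega>. ennreal (exp (\<theta> * h j (E j \<omega>))) \<partial>M)"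
proof -
  have "emeasure M {\<omega>\<in>space M. x \<le> (\<Sum>j\<in>J. h j (E j \<omega>))}
     \<le> ennreal (exp (- \<theta> * x)) *
       (\<integral>\<^sup>+\<omega>. ennreal (exp (\<theta> * (\<Sum>j\<in>J. h j (E j \<omega>)))) * indicator (space M) \<omega> \<partial>M)"
    by (rule Chernoff_ineq_nn_integral_ge[OF assms(2)]) auto
  also have "(\<integral>\<^sup>+\<omega>. ennreal (exp (\<theta> * (\<Sum>j\<in>J. h j (E j \<omega>)))) * indicator (space M) \<omega> \<partial>M)
      = (\<integral>\<^sup>+\<omega>. (\<Prod>j\<in>J. ennreal (exp (\<theta> * h j (E j \<omega>)))) \<partial>M)"
    by (intro nn_integral_cong) (simp add: sum_distrib_left exp_sum J prod_ennreal)
  also have "\<dots> = (\<Prod>j\<in>J. \<integral>\<^sup>+\<omega>. ennreal (exp (\<theta> * h j (E j \<omega>))) \<partial>M)"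
    by (rule nn_integral_prod_E[OF J]) simp
  finally show ?thesis .
qed

text \<open>As a_j \<le> j + 1, the epoch dominates p times a sum of independent Exp(j + 1) variables,
  whose Laplace transform at 2 is the product of the (j + 1) / (j + 3).\<close>
lemma prob_epoch_le:
  "prob {\<omega>\<in>space M. epoch p (sample_of E U \<omega>) (Suc k) \<le> t}
     \<le> exp (2 * t / p) * (2 / ((real k + 2) * (real k + 3)))"
proof -
  define n where "n = Suc k"
  have "emeasure M {\<omega>\<in>space M. epoch p (sample_of E U \<omega>) n \<le> t}
      \<le> emeasure M {\<omega>\<in>space M. - (t / p) \<le> (\<Sum>j\<in>{..<n}. - (E j \<omega> / (real j + 1)))}"
  proof (rule emeasure_mono_AE)
    show "AE \<omega> in M. \<omega> \<in> {\<omega>\<in>space M. epoch p (sample_of E U \<omega>) n \<le> t} \<longrightarrow>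
        \<omega> \<in> {\<omega>\<in>space M. - (t / p) \<le> (\<Sum>j\<in>{..<n}. - (E j \<omega> / (real j + 1)))}"
      using AE_E_nonneg
    proof eventually_elim
      case (elim \<omega>)
      then have "p * (\<Sum>j<n. E j \<omega> / (real j + 1)) \<le> epoch p (sample_of E U \<omega>) n"
        using epoch_ge_harmonic_weighted[of p "sample_of E U \<omega>" n] p_pos by simp
      then show ?case using p_pos by (auto simp: sum_negf field_simps)
    qed
  qed simp
  also have "\<dots> \<le> ennreal (exp (- 2 * - (t / p))) *
      (\<Prod>j\<in>{..<n}. \<integral>\<^sup>+\<omega>. ennreal (exp (2 * - (E j \<omega> / (real j + 1)))) \<partial>M)"
    by (rule Chernoff_sum_E[where h="\<lambda>j y. - (y / (real j + 1))"]) auto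
  also have "(\<Prod>j\<in>{..<n}. \<integral>\<^sup>+\<omega>. ennreal (exp (2 * - (E j \<omega> / (real j + 1)))) \<partial>M)
     = (\<Prod>j\<in>{..<n}. ennreal ((real j + 1) / (real j + 3)))"
  proof (intro prod.cong refl)
    fix j
    have "(\<integral>\<^sup>+\<omega>. ennreal (exp (2 * - (E j \<omega> / (real j + 1)))) \<partial>M) =
        (\<integral>\<^sup>+\<omega>. ennreal (exp (- (2 / (real j + 1)) * E j \<omega>)) \<partial>M)"
      by (simp add: field_simps)
    also have "\<dots> = ennreal (1 / (1 + 2 / (real j + 1)))"
      by (rule nn_integral_exp_E) (simp add: less_le_trans[of _ 0])
    finally show "(\<integral>\<^sup>+\<omega>. ennreal (exp (2 * - (E j \<omega> / (real j + 1)))) \<partial>M) =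
        ennreal ((real j + 1) / (real j + 3))"
      by (simp add: field_simps)
  qed
  also have "\<dots> = ennreal (2 / ((real n + 1) * (real n + 2)))"
    by (simp add: prod_ennreal prod_frac_telescope)
  finally show ?thesis
    by (simp add: ennreal_mult'[symmetric] emeasure_eq_measure n_def ennreal_le_iff add.commute)
qed

lemma summable_prob_epoch_le:
  "summable (\<lambda>k. prob {\<omega>\<in>space M. epoch p (sample_of E U \<omega>) (Suc k) \<le> t})"
proof (rule summable_comparison_test_ev)
  show "\<forall>\<^sub>F k in sequentially. norm (prob {\<omega>\<in>space M. epoch p (sample_of E U \<omega>) (Suc k) \<le> t})
      \<le> exp (2 * t / p) * (2 * (1 / (real k)\<^sup>2))"
    using eventually_gt_at_top[of "0::nat"]
  proof eventually_elim
    case (elim k)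
    have "2 / ((real k + 2) * (real k + 3)) \<le> 2 * (1 / (real k)\<^sup>2)"
      using elim by (simp add: power2_eq_square divide_simps mult_mono)
    then have "exp (2 * t / p) * (2 / ((real k + 2) * (real k + 3))) \<le>
        exp (2 * t / p) * (2 * (1 / (real k)\<^sup>2))"
      by (intro mult_left_mono) auto
    then show ?case
      using prob_epoch_le[of k t] by simp
  qed
  show "summable (\<lambda>k. exp (2 * t / p) * (2 * (1 / (real k)\<^sup>2)))"
    by (intro summable_mult summable_inverse_square)
qed

lemma AE_non_explosive: "AE \<omega> in M. \<exists>k. t < epoch p (sample_of E U \<omega>) (Suc k)"
proof -
  have "AE \<omega> in M. \<forall>\<^sub>F k in sequentially.
      \<omega> \<in> space M - {\<omega>\<in>space M. epoch p (sample_of E U \<omega>) (Suc k) \<le> t}"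
    by (rule borel_cantelli_AE1) (auto simp: summable_prob_epoch_le emeasure_eq_measure)
  then show ?thesis
    by eventually_elim (auto simp: eventually_sequentially not_le)
qed

lemma prob_birth_deviation_ge:
  assumes "0 < k" "0 \<le> \<epsilon>"
  shows "prob {\<omega>\<in>space M. \<epsilon> \<le> \<bar>\<Sum>j<k. A_birth p (sample_of E U \<omega>) j - p\<bar>} \<le> 2 * exp (-2 * \<epsilon>\<^sup>2 / real k)"
proof -
  define X where "X = (\<lambda>i \<omega>. if coord i \<omega> < p then 1 else (0::real))"
  have X_Inr: "X (Inr j) = (\<lambda>\<omega>. A_birth p (sample_of E U \<omega>) j)" for j
    by (simp add: X_def A_birth_def fun_eq_iff)
  interpret Hoeffding_ineq M "Inr ` {..<k}" X "\<lambda>_. 0" "\<lambda>_. 1" "(\<Sum>i\<in>Inr ` {..<k}. expectation (X i))"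
  proof unfold_locales
    show "indep_vars (\<lambda>_. borel) X (Inr ` {..<k})"
      unfolding X_def by (rule indep_vars_compose2[OF indep_vars_subset[OF indep]]) auto
  qed (auto simp: X_def)
  have "(\<Sum>i\<in>Inr ` {..<k}. X i \<omega>) - (\<Sum>i\<in>Inr ` {..<k}. expectation (X i)) =
      (\<Sum>j<k. A_birth p (sample_of E U \<omega>) j - p)" for \<omega>
    by (simp add: sum.reindex X_Inr expectation_A_birth sum_subtractf)
  then show ?thesis
    using Hoeffding_ineq_abs_ge[OF assms(2)] assms(1) by (simp add: card_image)
qed

lemma AE_birth_deviation:
  "AE \<omega> in M. \<forall>\<^sub>F k in sequentially.
     \<bar>\<Sum>j<k. A_birth p (sample_of E U \<omega>) j - p\<bar> \<le> real k powr (3/4)"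
proof (rule AE_eventually_abs_le)
  show "summable (\<lambda>k. prob {\<omega>\<in>space M. real k powr (3/4) < \<bar>\<Sum>j<k. A_birth p (sample_of E U \<omega>) j - p\<bar>})"
  proof (rule summable_comparison_test_ev)
    show "\<forall>\<^sub>F k in sequentially.
        norm (prob {\<omega>\<in>space M. real k powr (3/4) < \<bar>\<Sum>j<k. A_birth p (sample_of E U \<omega>) j - p\<bar>})
        \<le> 2 * exp (-2 * (real k powr (3/4))\<^sup>2 / real k)"
      using eventually_gt_at_top[of "0::nat"]
    proof eventually_elim
      case (elim k)
      have "prob {\<omega>\<in>space M. real k powr (3/4) < \<bar>\<Sum>j<k. A_birth p (sample_of E U \<omega>) j - p\<bar>}
          \<le> prob {\<omega>\<in>space M. real k powr (3/4) \<le> \<bar>\<Sum>j<k. A_birth p (sample_of E U \<omega>) j - p\<bar>}"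
        by (intro finite_measure_mono) (auto simp: A_birth_def)
      then show ?case
        using prob_birth_deviation_ge[OF elim, of "real k powr (3/4)"] by simp
    qed
    have "(\<lambda>k::nat. 2 * exp (-2 * (real k powr (3/4))\<^sup>2 / real k)) \<in> O(\<lambda>k. 1 / (real k)\<^sup>2)"
      by real_asymp
    then show "summable (\<lambda>k::nat. 2 * exp (-2 * (real k powr (3/4))\<^sup>2 / real k))"
      by (rule summable_comparison_test_bigo[rotated]) (simp add: summable_inverse_square)
  qed
qed (simp add: A_birth_def)

lemma nn_integral_exp_centered_E_le:
  assumes "0 < \<theta>" "\<theta> \<le> 1/3"
  shows "(\<integral>\<^sup>+\<omega>. ennreal (exp (\<theta> * (E j \<omega> - 1))) \<partial>M) \<le> ennreal (exp (\<theta>\<^sup>2))"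
    and "(\<integral>\<^sup>+\<omega>. ennreal (exp (\<theta> * (1 - E j \<omega>))) \<partial>M) \<le> ennreal (exp (\<theta>\<^sup>2))"
proof -
  have "(\<integral>\<^sup>+\<omega>. ennreal (exp (\<theta> * (E j \<omega> - 1))) \<partial>M) =
      (\<integral>\<^sup>+\<omega>. ennreal (exp (- \<theta>)) * ennreal (exp (- (- \<theta>) * E j \<omega>)) \<partial>M)"
    by (intro nn_integral_cong) (simp add: ennreal_mult'[symmetric] exp_add[symmetric] algebra_simps)
  also have "\<dots> = ennreal (exp (- \<theta>)) * ennreal (1 / (1 + - \<theta>))"
    using assms nn_integral_exp_E[of "- \<theta>" j] by (subst nn_integral_cmult) simp_all
  also have "\<dots> = ennreal (exp (- \<theta>) * (1 / (1 - \<theta>)))"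
    using assms by (simp add: ennreal_mult'[symmetric])
  finally show "(\<integral>\<^sup>+\<omega>. ennreal (exp (\<theta> * (E j \<omega> - 1))) \<partial>M) \<le> ennreal (exp (\<theta>\<^sup>2))"
    using exp_neg_div_one_minus_le[OF assms] by (simp add: ennreal_leI)
  have "(\<integral>\<^sup>+\<omega>. ennreal (exp (\<theta> * (1 - E j \<omega>))) \<partial>M) =
      (\<integral>\<^sup>+\<omega>. ennreal (exp \<theta>) * ennreal (exp (- \<theta> * E j \<omega>)) \<partial>M)"
    by (intro nn_integral_cong) (simp add: ennreal_mult'[symmetric] exp_add[symmetric] algebra_simps)
  also have "\<dots> = ennreal (exp \<theta>) * ennreal (1 / (1 + \<theta>))"
    using assms nn_integral_exp_E[of \<theta> j] by (subst nn_integral_cmult) simp_all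
  also have "\<dots> = ennreal (exp \<theta> * (1 / (1 + \<theta>)))"
    using assms by (simp add: ennreal_mult'[symmetric])
  finally show "(\<integral>\<^sup>+\<omega>. ennreal (exp (\<theta> * (1 - E j \<omega>))) \<partial>M) \<le> ennreal (exp (\<theta>\<^sup>2))"
    using exp_div_one_plus_le[of \<theta>] assms by (simp add: ennreal_leI)
qed

lemma prob_holding_sum_ge:
  assumes "0 < \<theta>" "\<theta> \<le> 1/3"
  shows "prob {\<omega>\<in>space M. y \<le> (\<Sum>j<k. E j \<omega> - 1)} \<le> exp (- \<theta> * y + real k * \<theta>\<^sup>2)"
    and "prob {\<omega>\<in>space M. y \<le> (\<Sum>j<k. 1 - E j \<omega>)} \<le> exp (- \<theta> * y + real k * \<theta>\<^sup>2)"
proof -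
  have prod_le: "ennreal (exp (- \<theta> * y)) * (\<Prod>j<k. \<integral>\<^sup>+\<omega>. ennreal (exp (\<theta> * h j \<omega>)) \<partial>M)
      \<le> ennreal (exp (- \<theta> * y + real k * \<theta>\<^sup>2))"
    if "\<And>j. (\<integral>\<^sup>+\<omega>. ennreal (exp (\<theta> * h j \<omega>)) \<partial>M) \<le> ennreal (exp (\<theta>\<^sup>2))" for h
  proof -
    have "ennreal (exp (- \<theta> * y)) * (\<Prod>j<k. \<integral>\<^sup>+\<omega>. ennreal (exp (\<theta> * h j \<omega>)) \<partial>M)
        \<le> ennreal (exp (- \<theta> * y)) * (\<Prod>j<k. ennreal (exp (\<theta>\<^sup>2)))"
      by (intro mult_left_mono prod_mono_ennreal that) auto
    also have "\<dots> = ennreal (exp (- \<theta> * y + real k * \<theta>\<^sup>2))"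
      by (simp add: ennreal_power ennreal_mult'[symmetric] exp_diff exp_minus exp_of_nat_mult
          divide_inverse mult.commute)
    finally show ?thesis .
  qed
  have "emeasure M {\<omega>\<in>space M. y \<le> (\<Sum>j<k. E j \<omega> - 1)} \<le> ennreal (exp (- \<theta> * y + real k * \<theta>\<^sup>2))"
    using Chernoff_sum_E[where h="\<lambda>j z. z - 1" and J="{..<k}", of \<theta> y] assms
      prod_le[of "\<lambda>j \<omega>. E j \<omega> - 1", OF nn_integral_exp_centered_E_le(1)[OF assms]]
    by (auto intro: order_trans)
  then show "prob {\<omega>\<in>space M. y \<le> (\<Sum>j<k. E j \<omega> - 1)} \<le> exp (- \<theta> * y + real k * \<theta>\<^sup>2)"
    by (simp add: emeasure_eq_measure)
  have "emeasure M {\<omega>\<in>space M. y \<le> (\<Sum>j<k. 1 - E j \<omega>)} \<le> ennreal (exp (- \<theta> * y + real k * \<theta>\<^sup>2))"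
    using Chernoff_sum_E[where h="\<lambda>j z. 1 - z" and J="{..<k}", of \<theta> y] assms
      prod_le[of "\<lambda>j \<omega>. 1 - E j \<omega>", OF nn_integral_exp_centered_E_le(2)[OF assms]]
    by (auto intro: order_trans)
  then show "prob {\<omega>\<in>space M. y \<le> (\<Sum>j<k. 1 - E j \<omega>)} \<le> exp (- \<theta> * y + real k * \<theta>\<^sup>2)"
    by (simp add: emeasure_eq_measure)
qed

lemma AE_holding_deviation:
  "AE \<omega> in M. \<forall>\<^sub>F k in sequentially. \<bar>\<Sum>j<k. E j \<omega> - 1\<bar> \<le> real k powr (3/4)"
proof (rule AE_eventually_abs_le)
  \<comment> \<open>with this \<theta> the Chernoff bound below is 2 exp (- 2 sqrt k / 9)\<close>
  define \<theta> where "\<theta> k = real k powr (-1/4) / 3" for k :: nat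
  define bound where "bound k = 2 * exp (- \<theta> k * real k powr (3/4) + real k * (\<theta> k)\<^sup>2)" for k
  show "summable (\<lambda>k. prob {\<omega>\<in>space M. real k powr (3/4) < \<bar>\<Sum>j<k. E j \<omega> - 1\<bar>})"
  proof (rule summable_comparison_test_ev)
    show "\<forall>\<^sub>F k in sequentially. norm (prob {\<omega>\<in>space M. real k powr (3/4) < \<bar>\<Sum>j<k. E j \<omega> - 1\<bar>})
        \<le> bound k"
      using eventually_gt_at_top[of "0::nat"]
    proof eventually_elim
      case (elim k)
      have "1 \<le> real k powr (1/4)" using elim by (intro ge_one_powr_ge_zero) auto
      then have "real k powr (-1/4) \<le> 1" by (auto simp: powr_minus_divide divide_le_eq_1)
      then have \<theta>: "0 < \<theta> k" "\<theta> k \<le> 1/3" using elim by (auto simp: \<theta>_def)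
      have "(\<Sum>j<k. 1 - E j \<omega>) = - (\<Sum>j<k. E j \<omega> - 1)" for \<omega>
        by (simp add: sum_negf[symmetric])
      then have "prob {\<omega>\<in>space M. real k powr (3/4) < \<bar>\<Sum>j<k. E j \<omega> - 1\<bar>} \<le>
          prob ({\<omega>\<in>space M. real k powr (3/4) \<le> (\<Sum>j<k. E j \<omega> - 1)} \<union>
                {\<omega>\<in>space M. real k powr (3/4) \<le> (\<Sum>j<k. 1 - E j \<omega>)})"
        by (intro finite_measure_mono) (auto simp: abs_if)
      also have "\<dots> \<le> prob {\<omega>\<in>space M. real k powr (3/4) \<le> (\<Sum>j<k. E j \<omega> - 1)} +
          prob {\<omega>\<in>space M. real k powr (3/4) \<le> (\<Sum>j<k. 1 - E j \<omega>)}"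
        by (intro measure_Un_le) auto
      also have "\<dots> \<le> bound k"
        unfolding bound_def using prob_holding_sum_ge[OF \<theta>, of "real k powr (3/4)" k] by simp
      finally show ?case by simp
    qed
    have "bound \<in> O(\<lambda>k. 1 / (real k)\<^sup>2)"
      unfolding bound_def \<theta>_def power_divide by real_asymp
    then show "summable bound"
      by (rule summable_comparison_test_bigo[rotated]) (simp add: summable_inverse_square)
  qed
qed simp

lemma AE_regular_sample: "AE \<omega> in M. regular_sample p (sample_of E U \<omega>)"
  using AE_E_nonneg AE_birth_deviation AE_holding_deviation
  by eventually_elim (simp add: regular_sample_def p_pos p_le_1)

lemma nA_limit_measurable: "(\<lambda>\<omega>. nA_limit p (sample_of E U \<omega>)) \<in> borel_measurable M"
proof -
  have [measurable]: "(\<lambda>\<omega>. chain_nA p (sample_of E U \<omega>) k) \<in> borel_measurable M" for k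
    by (rule measurable_compose[OF sample_of_measurable chain_nA_measurable]) auto
  have "(\<lambda>\<omega>. lim (\<lambda>k. ln (chain_nA p (sample_of E U \<omega>) k) - epoch p (sample_of E U \<omega>) k))
      \<in> borel_measurable M"
    by (rule borel_measurable_lim_metric) simp
  then show ?thesis
    unfolding nA_limit_def by simp
qed

end

section \<open>The martingale property\<close>

text \<open>Everything up to the epoch of the (k+1)-th jump depends only on these coordinates; the
  k-th choice, which decides the type born at that jump, is not among them.\<close>
definition past_coords :: "nat \<Rightarrow> (nat + nat) set" where
  "past_coords k = range Inl \<union> Inr ` {..<k}"

lemma
  assumes "\<And>i. i \<in> past_coords k \<Longrightarrow> x i = y i"
  shows chain_cong_past: "m \<le> k \<Longrightarrow> chain p x m = chain p y m"
    and epoch_cong_past: "m \<le> Suc k \<Longrightarrow> epoch p x m = epoch p y m"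
proof -
  have births: "births p x m = births p y m" if "m \<le> k" for m
    unfolding births_def using that assms by (intro sum.cong) (auto simp: past_coords_def)
  then show "m \<le> k \<Longrightarrow> chain p x m = chain p y m"
    by (simp add: chain_def)
  show "m \<le> Suc k \<Longrightarrow> epoch p x m = epoch p y m"
    unfolding epoch_def chain_nA_def using assms births
    by (intro sum.cong) (auto simp: past_coords_def)
qed

text \<open>Only finitely many epochs and chain states occur on the right-hand side, which makes
  the event measurable in the past coordinates.\<close>
lemma population_in_iff_chain:
  assumes "\<exists>i\<le>k. s < epoch p x (Suc i)" "r \<le> s"
  shows "population p r x \<in> B \<longleftrightarrow>
    (\<exists>m\<le>k. r < epoch p x (Suc m) \<and> (\<forall>m'<m. \<not> r < epoch p x (Suc m')) \<and> chain p x m \<in> B)"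
proof -
  have le: "\<exists>i\<le>k. r < epoch p x (Suc i)"
    using assms by (meson le_less_trans)
  then have ex: "\<exists>k. r < epoch p x (Suc k)"
    by blast
  have char: "m = jump_count p r x \<longleftrightarrow> r < epoch p x (Suc m) \<and> (\<forall>m'<m. \<not> r < epoch p x (Suc m'))" for m
    using epoch_Suc_jump_count_gt[OF ex] epoch_Suc_le_before_jump_count[of _ p r x]
    by (metis jump_count_def linorder_neqE_nat not_less Least_le leD)
  have "jump_count p r x \<le> k"
    using le jump_count_le_iff[OF ex] by blast
  show ?thesis
  proof
    assume "population p r x \<in> B"
    then show "\<exists>m\<le>k. r < epoch p x (Suc m) \<and> (\<forall>m'<m. \<not> r < epoch p x (Suc m')) \<and> chain p x m \<in> B"
      using \<open>jump_count p r x \<le> k\<close> char[of "jump_count p r x"]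
      by (auto simp: population_eq_chain[OF ex])
  next
    assume "\<exists>m\<le>k. r < epoch p x (Suc m) \<and> (\<forall>m'<m. \<not> r < epoch p x (Suc m')) \<and> chain p x m \<in> B"
    then obtain m where "r < epoch p x (Suc m)" "\<forall>m'<m. \<not> r < epoch p x (Suc m')" "chain p x m \<in> B"
      by blast
    then show "population p r x \<in> B"
      using char[of m] by (simp add: population_eq_chain[OF ex])
  qed
qed

lemma
  assumes "\<exists>k. t < epoch p x (Suc k)" "s \<le> t"
  shows jumps_between_eq: "{k. (\<exists>i\<le>k. s < epoch p x (Suc i)) \<and> \<not> (\<exists>i\<le>k. t < epoch p x (Suc i))}
      = {jump_count p s x..<jump_count p t x}"
    and balance_population_diff: "balance p (population p t x) - balance p (population p s x)
      = (\<Sum>k\<in>{jump_count p s x..<jump_count p t x}. p - A_birth p x k)"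
proof -
  have ex_s: "\<exists>k. s < epoch p x (Suc k)"
    using assms epoch_Suc_jump_count_gt by (meson le_less_trans)
  have mono: "jump_count p s x \<le> jump_count p t x"
    using jump_count_le_iff[OF ex_s] epoch_Suc_jump_count_gt[OF assms(1)] assms(2) by force
  show "{k. (\<exists>i\<le>k. s < epoch p x (Suc i)) \<and> \<not> (\<exists>i\<le>k. t < epoch p x (Suc i))}
      = {jump_count p s x..<jump_count p t x}"
    using jump_count_le_iff[OF assms(1)] jump_count_le_iff[OF ex_s] by auto
  have "balance p (population p t x) - balance p (population p s x)
      = balance p (chain p x (jump_count p t x)) - balance p (chain p x (jump_count p s x))"
    using assms(1) ex_s by (simp add: population_eq_chain)
  also have "\<dots> = (\<Sum>k\<in>{jump_count p s x..<jump_count p t x}.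
      balance p (chain p x (Suc k)) - balance p (chain p x k))"
    by (rule sum_Suc_diff'[symmetric]) (rule mono)
  finally show "balance p (population p t x) - balance p (population p s x)
      = (\<Sum>k\<in>{jump_count p s x..<jump_count p t x}. p - A_birth p x k)"
    by (simp add: balance_chain_Suc)
qed

lemma epoch_measurable_past:
  "i \<le> k \<Longrightarrow> (\<lambda>x. epoch p x (Suc i)) \<in> borel_measurable (PiM (past_coords k) (\<lambda>_. borel))"
  by (rule epoch_measurable) (auto simp: past_coords_def)

lemma chain_measurable_past:
  "m \<le> k \<Longrightarrow> (\<lambda>x. chain p x m) \<in> PiM (past_coords k) (\<lambda>_. borel) \<rightarrow>\<^sub>M count_space UNIV"
  by (rule chain_measurable) (auto simp: past_coords_def)

context pdbp_setting
begin

definition past :: "nat \<Rightarrow> 'a \<Rightarrow> nat + nat \<Rightarrow> real" where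
  "past k \<omega> = restrict (\<lambda>i. coord i \<omega>) (past_coords k)"

definition past_algebra :: "nat \<Rightarrow> 'a measure" where
  "past_algebra k = vimage_algebra (space M) (past k) (PiM (past_coords k) (\<lambda>_. borel))"

lemma past_measurable: "past k \<in> M \<rightarrow>\<^sub>M PiM (past_coords k) (\<lambda>_. borel)"
  unfolding past_def[abs_def] by (intro measurable_restrict) simp

lemma sets_past_algebra_subset: "sets (past_algebra k) \<subseteq> sets M"
  unfolding past_algebra_def
  by (subst sets_vimage_algebra2)
    (use measurable_space[OF past_measurable] measurable_sets[OF past_measurable] in auto)

lemma past_event:
  assumes "Measurable.pred (PiM (past_coords k) (\<lambda>_. borel)) Q"
    and "\<And>x y. (\<And>i. i \<in> past_coords k \<Longrightarrow> x i = y i) \<Longrightarrow> Q x = Q y"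
  shows "{\<omega>\<in>space M. Q (sample_of E U \<omega>)} \<in> sets (past_algebra k)"
proof -
  have "past k \<in> past_algebra k \<rightarrow>\<^sub>M PiM (past_coords k) (\<lambda>_. borel)"
    unfolding past_algebra_def
    by (rule measurable_vimage_algebra1) (use measurable_space[OF past_measurable] in auto)
  then have "{\<omega>\<in>space (past_algebra k). Q (past k \<omega>)} \<in> sets (past_algebra k)"
    using measurable_compose[OF _ assms(1)] by (simp add: pred_def)
  moreover have "Q (sample_of E U \<omega>) = Q (past k \<omega>)" for \<omega>
    by (rule assms(2)) (simp add: past_def sample_of_eq_coord)
  ultimately show ?thesis
    by (simp add: past_algebra_def)
qed

text \<open>At most k jumps by time s, phrased without jump_count so that it is visibly an event of
  the past algebra of step k.\<close>
definition at_most_jumps :: "real \<Rightarrow> nat \<Rightarrow> 'a set" where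
  "at_most_jumps s k = {\<omega>\<in>space M. \<exists>i\<le>k. s < epoch p (sample_of E U \<omega>) (Suc i)}"

lemma at_most_jumps_past: "at_most_jumps s k \<in> sets (past_algebra k)"
  unfolding at_most_jumps_def
proof (rule past_event)
  have [measurable]: "(\<lambda>x. epoch p x (Suc i)) \<in> borel_measurable (PiM (past_coords k) (\<lambda>_. borel))"
    if "i \<in> {..k}" for i
    using that by (simp add: epoch_measurable_past)
  have "Measurable.pred (PiM (past_coords k) (\<lambda>_. borel)) (\<lambda>x. \<exists>i\<in>{..k}. s < epoch p x (Suc i))"
    by measurable
  then show "Measurable.pred (PiM (past_coords k) (\<lambda>_. borel)) (\<lambda>x. \<exists>i\<le>k. s < epoch p x (Suc i))"
    by (simp add: atMost_iff)
  show "(\<exists>i\<le>k. s < epoch p x (Suc i)) = (\<exists>i\<le>k. s < epoch p y (Suc i))"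
    if "\<And>i. i \<in> past_coords k \<Longrightarrow> x i = y i" for x y
    using epoch_cong_past[of k x y, OF that] by (metis Suc_le_mono)
qed

lemma population_event_past:
  assumes "r \<le> s"
  shows "{\<omega>\<in>space M. population p r (sample_of E U \<omega>) \<in> B} \<inter> at_most_jumps s k \<in> sets (past_algebra k)"
proof -
  define Q where "Q x \<longleftrightarrow> (\<exists>i\<in>{..k}. s < epoch p x (Suc i)) \<and>
    (\<exists>m\<in>{..k}. r < epoch p x (Suc m) \<and> (\<forall>m'\<in>{..k}. m' < m \<longrightarrow> \<not> r < epoch p x (Suc m')) \<and>
      chain p x m \<in> B)" for x
  have "Q x \<longleftrightarrow> (\<exists>i\<le>k. s < epoch p x (Suc i)) \<and> population p r x \<in> B" for x
  proof (cases "\<exists>i\<le>k. s < epoch p x (Suc i)")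
    case True
    show ?thesis unfolding Q_def population_in_iff_chain[OF True assms] by auto
  qed (auto simp: Q_def)
  then have "{\<omega>\<in>space M. population p r (sample_of E U \<omega>) \<in> B} \<inter> at_most_jumps s k =
      {\<omega>\<in>space M. Q (sample_of E U \<omega>)}"
    by (auto simp: at_most_jumps_def)
  also have "\<dots> \<in> sets (past_algebra k)"
  proof (rule past_event)
    have [measurable]: "(\<lambda>x. epoch p x (Suc i)) \<in> borel_measurable (PiM (past_coords k) (\<lambda>_. borel))"
      if "i \<in> {..k}" for i
      using that by (simp add: epoch_measurable_past)
    have [measurable]: "Measurable.pred (PiM (past_coords k) (\<lambda>_. borel)) (\<lambda>x. chain p x m \<in> B)"
      if "m \<in> {..k}" for m
    proof -
      have "(\<lambda>x. (\<lambda>y. y \<in> B) (chain p x m)) \<in> PiM (past_coords k) (\<lambda>_. borel) \<rightarrow>\<^sub>M count_space UNIV"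
        by (rule measurable_compose[OF chain_measurable_past measurable_count_space]) (use that in simp)
      then show ?thesis by (simp add: pred_def)
    qed
    show "Measurable.pred (PiM (past_coords k) (\<lambda>_. borel)) Q"
      unfolding Q_def by measurable
    show "Q x = Q y" if "\<And>i. i \<in> past_coords k \<Longrightarrow> x i = y i" for x y
      using epoch_cong_past[of k x y, OF that] chain_cong_past[of k x y, OF that] by (simp add: Q_def)
  qed
  finally show ?thesis .
qed

abbreviation filtration :: "real \<Rightarrow> 'a measure" where
  "filtration \<equiv> natural_filtration M (\<lambda>t \<omega>. population p t (sample_of E U \<omega>))"

definition generators :: "real \<Rightarrow> 'a set set" where
  "generators s = {(\<lambda>t \<omega>. population p t (sample_of E U \<omega>)) r -` B \<inter> space M | r B. 0 \<le> r \<and> r \<le> s}"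

lemma generators_subset: "generators s \<subseteq> Pow (space M)"
  by (auto simp: generators_def)

lemma sets_filtration: "sets (filtration s) = sigma_sets (space M) (generators s)"
  unfolding natural_filtration_def generators_def[symmetric]
  using generators_subset by (simp add: sets_measure_of)

lemma space_filtration: "space (filtration s) = space M"
  unfolding natural_filtration_def generators_def[symmetric]
  using generators_subset by (simp add: space_measure_of)

lemma filtration_inter_at_most_jumps:
  assumes "A \<in> sets (filtration s)"
  shows "A \<inter> at_most_jumps s k \<in> sets (past_algebra k)"
proof -
  have "A \<in> sigma_sets (space M) (generators s)"
    using assms by (simp add: sets_filtration)
  then show ?thesis
  proof (induction rule: sigma_sets.induct)
    case (Basic a)
    then obtain r B where "a = {\<omega>\<in>space M. population p r (sample_of E U \<omega>) \<in> B}" "r \<le> s"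
      by (auto simp: generators_def vimage_def Int_def conj_commute)
    then show ?case
      using population_event_past by simp
  next
    case (Compl a)
    have "(space M - a) \<inter> at_most_jumps s k = at_most_jumps s k - (a \<inter> at_most_jumps s k)"
      by (auto simp: at_most_jumps_def)
    then show ?case
      using Compl at_most_jumps_past by auto
  next
    case (Union a)
    then have "(\<Union>i. a i \<inter> at_most_jumps s k) \<in> sets (past_algebra k)"
      by (intro sets.countable_UN) auto
    then show ?case by (simp add: Int_UN_distrib2)
  qed simp
qed

lemma indep_birth_increment_past_event:
  assumes "S \<in> sets (PiM (past_coords k) (\<lambda>_. borel))"
  shows "indep_var borel (\<lambda>\<omega>. p - A_birth p (sample_of E U \<omega>) k)
    borel (\<lambda>\<omega>. indicator S (past k \<omega>) :: real)"
proof -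
  have "indep_var (PiM {Inr k} (\<lambda>_. borel)) (\<lambda>\<omega>. restrict (\<lambda>i. coord i \<omega>) {Inr k})
      (PiM (past_coords k) (\<lambda>_. borel)) (past k)"
    unfolding past_def[abs_def] by (rule indep_var_restrict[OF indep]) (auto simp: past_coords_def)
  moreover have "(\<lambda>y. p - (if y (Inr k) < p then 1 else 0) :: real) \<in> borel_measurable (PiM {Inr k} (\<lambda>_. borel))"
  proof -
    have [measurable]: "(\<lambda>y. y (Inr k)) \<in> borel_measurable (PiM {Inr k} (\<lambda>_. borel :: real measure))"
      by (rule measurable_component_singleton) simp
    show ?thesis by measurable
  qed
  ultimately have "indep_var borel
      ((\<lambda>y. p - (if y (Inr k) < p then 1 else 0) :: real) \<circ> (\<lambda>\<omega>. restrict (\<lambda>i. coord i \<omega>) {Inr k}))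
      borel (indicator S \<circ> past k)"
    by (rule indep_var_compose) (use assms in simp)
  then show ?thesis
    by (simp add: comp_def A_birth_def)
qed

lemma integral_birth_increment_past:
  assumes "B \<in> sets (past_algebra k)"
  shows "expectation (\<lambda>\<omega>. (p - A_birth p (sample_of E U \<omega>) k) * indicator B \<omega>) = 0"
proof -
  obtain S where S: "S \<in> sets (PiM (past_coords k) (\<lambda>_. borel))" "B = past k -` S \<inter> space M"
    using assms unfolding past_algebra_def
    by (subst (asm) sets_vimage_algebra2) (use measurable_space[OF past_measurable] in auto)
  define step where "step = (\<lambda>\<omega>. p - A_birth p (sample_of E U \<omega>) k)"
  have indep_step: "indep_var borel step borel (indicator S \<circ> past k)"
    using indep_birth_increment_past_event[OF S(1)] by (simp add: step_def comp_def)
  have "integrable M step"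
    by (rule integrable_const_bound[where B=1])
      (use indep_var_rv1[OF indep_step] p_pos p_le_1 in \<open>auto simp: step_def A_birth_def\<close>)
  moreover have "integrable M (indicator S \<circ> past k :: 'a \<Rightarrow> real)"
    by (rule integrable_const_bound[where B=1])
      (use indep_var_rv2[OF indep_step] in \<open>auto simp: indicator_def\<close>)
  ultimately have "expectation (\<lambda>\<omega>. step \<omega> * (indicator S \<circ> past k) \<omega>) =
      expectation step * expectation (indicator S \<circ> past k)"
    by (rule indep_var_lebesgue_integral[OF indep_step])
  moreover have "expectation step = 0"
    unfolding step_def using expectation_A_birth[of k]
    by (subst Bochner_Integration.integral_diff)
      (auto simp: prob_space A_birth_def intro!: integrable_const_bound[where B=1])
  moreover have "expectation (\<lambda>\<omega>. (p - A_birth p (sample_of E U \<omega>) k) * indicator B \<omega>) =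
      expectation (\<lambda>\<omega>. step \<omega> * (indicator S \<circ> past k) \<omega>)"
    by (intro Bochner_Integration.integral_cong) (auto simp: S(2) indicator_def step_def)
  ultimately show ?thesis
    by simp
qed

definition Z :: "real \<Rightarrow> 'a \<Rightarrow> real" where
  "Z t \<omega> = balance p (population p t (sample_of E U \<omega>))"

lemma Z_measurable [measurable]: "Z t \<in> borel_measurable M"
  unfolding Z_def[abs_def]
  by (rule measurable_compose[OF population_sample_measurable]) simp

lemma Z_filtration_measurable:
  assumes "0 \<le> t"
  shows "Z t \<in> borel_measurable (filtration t)"
proof -
  have "(\<lambda>\<omega>. population p t (sample_of E U \<omega>)) \<in> filtration t \<rightarrow>\<^sub>M count_space UNIV"
    unfolding measurable_count_space_eq2_countable
  proof safe
    fix y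
    have "(\<lambda>\<omega>. population p t (sample_of E U \<omega>)) -` {y} \<inter> space M \<in> generators t"
      unfolding generators_def using assms by blast
    then show "(\<lambda>\<omega>. population p t (sample_of E U \<omega>)) -` {y} \<inter> space (filtration t) \<in> sets (filtration t)"
      unfolding space_filtration sets_filtration by (rule sigma_sets.Basic)
  qed simp
  then show ?thesis
    unfolding Z_def[abs_def] by (rule measurable_compose) simp
qed

lemma sets_filtration_subset: "sets (filtration s) \<subseteq> sets M"
proof -
  have "generators s \<subseteq> sets M"
    using measurable_sets[OF population_sample_measurable] by (auto simp: generators_def)
  then show ?thesis
    unfolding sets_filtration by (rule sets.sigma_sets_subset)
qed

lemma subalgebra_filtration: "subalgebra M (filtration t)"
  unfolding subalgebra_def using sets_filtration_subset space_filtration by simp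

lemma filtration_mono: "s \<le> t \<Longrightarrow> sets (filtration s) \<subseteq> sets (filtration t)"
  unfolding sets_filtration by (rule sigma_sets_mono') (unfold generators_def, blast intro: order_trans)

definition jumped_by :: "real \<Rightarrow> nat \<Rightarrow> 'a set" where
  "jumped_by t k = {\<omega>\<in>space M. epoch p (sample_of E U \<omega>) (Suc k) \<le> t}"

lemma at_most_jumps_sets [measurable]: "at_most_jumps s k \<in> sets M"
  using at_most_jumps_past sets_past_algebra_subset by blast

lemma jumped_by_sets [measurable]: "jumped_by t k \<in> sets M"
  unfolding jumped_by_def by measurable

lemma AE_jumped_by_sums_jump_count:
  "AE \<omega> in M. (\<lambda>k. indicator (jumped_by t k) \<omega> :: real) sums real (jump_count p t (sample_of E U \<omega>))"
  using AE_E_nonneg AE_non_explosive[of t] AE_space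
proof eventually_elim
  case (elim \<omega>)
  define x where "x = sample_of E U \<omega>"
  have "\<omega> \<in> jumped_by t k \<longleftrightarrow> k < jump_count p t x" for k
  proof
    assume "\<omega> \<in> jumped_by t k"
    moreover have "epoch p x (Suc (jump_count p t x)) \<le> epoch p x (Suc k)" if "jump_count p t x \<le> k"
      using that elim(1) p_pos by (intro epoch_mono) (auto simp: x_def)
    ultimately show "k < jump_count p t x"
      using epoch_Suc_jump_count_gt[OF elim(2)[folded x_def]] by (force simp: jumped_by_def x_def)
  qed (use elim(3) epoch_Suc_le_before_jump_count in \<open>auto simp: jumped_by_def x_def\<close>)
  then have "(\<lambda>k. indicator (jumped_by t k) \<omega> :: real) sums (\<Sum>k<jump_count p t x. indicator (jumped_by t k) \<omega>)"
    by (intro sums_finite) (auto simp: indicator_def)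
  moreover have "(\<Sum>k<jump_count p t x. indicator (jumped_by t k) \<omega> :: real) = real (jump_count p t x)"
    using \<open>\<And>k. \<omega> \<in> jumped_by t k \<longleftrightarrow> k < jump_count p t x\<close> by (simp add: indicator_def)
  ultimately show ?case by (simp add: x_def)
qed

lemma integrable_suminf_jumped_by: "integrable M (\<lambda>\<omega>. \<Sum>k. indicator (jumped_by t k) \<omega> :: real)"
proof (rule integrable_suminf)
  show "AE \<omega> in M. summable (\<lambda>k. norm (indicator (jumped_by t k) \<omega> :: real))"
    using AE_jumped_by_sums_jump_count by eventually_elim (auto simp: sums_iff)
  show "summable (\<lambda>k. \<integral>\<omega>. norm (indicator (jumped_by t k) \<omega> :: real) \<partial>M)"
    using summable_prob_epoch_le[of t] by (simp add: jumped_by_def)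
qed (auto simp: emeasure_eq_measure)

lemma Z_integrable: "integrable M (Z t)"
proof (rule Bochner_Integration.integrable_bound)
  show "integrable M (\<lambda>\<omega>. 2 + (\<Sum>k. indicator (jumped_by t k) \<omega> :: real))"
    using integrable_suminf_jumped_by by simp
  show "AE \<omega> in M. norm (Z t \<omega>) \<le> norm (2 + (\<Sum>k. indicator (jumped_by t k) \<omega> :: real))"
    using AE_non_explosive[of t] AE_jumped_by_sums_jump_count[of t]
  proof eventually_elim
    case (elim \<omega>)
    then have "\<bar>Z t \<omega>\<bar> \<le> 2 + (\<Sum>k. indicator (jumped_by t k) \<omega>)"
      using abs_balance_chain_le[of p "sample_of E U \<omega>" "jump_count p t (sample_of E U \<omega>)"] p_pos p_le_1
      by (simp add: Z_def population_eq_chain sums_iff add.commute)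
    moreover have "0 \<le> (\<Sum>k. indicator (jumped_by t k) \<omega> :: real)"
      using elim(2) by (simp add: sums_iff)
    ultimately show ?case by simp
  qed
qed simp

text \<open>Nonzero only on A and when the jump decided by the k-th choice happens in (s, t];
  it is then the change of Z caused by that jump.\<close>
definition jump_increment :: "'a set \<Rightarrow> real \<Rightarrow> real \<Rightarrow> nat \<Rightarrow> 'a \<Rightarrow> real" where
  "jump_increment A s t k \<omega> =
     (p - A_birth p (sample_of E U \<omega>) k) * indicator (A \<inter> (at_most_jumps s k - at_most_jumps t k)) \<omega>"

lemma jump_increment_eq:
  assumes "\<omega> \<in> space M" "\<exists>k. t < epoch p (sample_of E U \<omega>) (Suc k)" "s \<le> t"
  defines "x \<equiv> sample_of E U \<omega>"
  shows "jump_increment A s t k \<omega> =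
    (if k \<in> {jump_count p s x..<jump_count p t x} then (p - A_birth p x k) * indicator A \<omega> else 0)"
  using jumps_between_eq[OF assms(2,3)] assms(1)
  by (auto simp: jump_increment_def at_most_jumps_def x_def indicator_def set_eq_iff)

lemma integral_jump_increment:
  assumes "A \<in> sets (filtration s)"
  shows "integral\<^sup>L M (jump_increment A s t k) = 0"
proof -
  have "A \<inter> (at_most_jumps s k - at_most_jumps t k) = (A \<inter> at_most_jumps s k) - at_most_jumps t k"
    by auto
  also have "\<dots> \<in> sets (past_algebra k)"
    using filtration_inter_at_most_jumps[OF assms] at_most_jumps_past by (rule sets.Diff)
  finally show ?thesis
    unfolding jump_increment_def[abs_def] by (rule integral_birth_increment_past)
qed

lemma integrable_jump_increment:
  assumes "A \<in> sets (filtration s)"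
  shows "integrable M (jump_increment A s t k)"
proof -
  have "A \<inter> (at_most_jumps s k - at_most_jumps t k) \<in> sets M"
    using assms sets_filtration_subset by (intro sets.Int sets.Diff) auto
  then show ?thesis
    unfolding jump_increment_def[abs_def]
    by (intro integrable_real_mult_indicator integrable_const_bound[where B=1])
      (use p_pos p_le_1 in \<open>auto simp: A_birth_def\<close>)
qed

lemma summable_integral_norm_jump_increment:
  assumes "A \<in> sets (filtration s)"
  shows "summable (\<lambda>k. \<integral>\<omega>. norm (jump_increment A s t k \<omega>) \<partial>M)"
proof (rule summable_comparison_test[OF _ summable_prob_epoch_le[of t]])
  have "norm (jump_increment A s t k \<omega>) \<le> indicator (jumped_by t k) \<omega>" for k \<omega>
    using p_pos p_le_1
    by (auto simp: jump_increment_def at_most_jumps_def jumped_by_def A_birth_def indicator_def not_less)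
  then have "(\<integral>\<omega>. norm (jump_increment A s t k \<omega>) \<partial>M) \<le> (\<integral>\<omega>. indicator (jumped_by t k) \<omega> \<partial>M)" for k
    by (intro integral_mono integrable_norm integrable_jump_increment[OF assms])
      (auto simp: emeasure_eq_measure)
  then have "(\<integral>\<omega>. norm (jump_increment A s t k \<omega>) \<partial>M) \<le> prob (jumped_by t k)" for k
    by simp
  then show "\<exists>N. \<forall>k\<ge>N. norm (\<integral>\<omega>. norm (jump_increment A s t k \<omega>) \<partial>M)
      \<le> prob {\<omega> \<in> space M. epoch p (sample_of E U \<omega>) (Suc k) \<le> t}"
    by (auto simp: jumped_by_def)
qed

lemma AE_jump_increment_sums:
  assumes "s \<le> t"
  shows "AE \<omega> in M. summable (\<lambda>k. norm (jump_increment A s t k \<omega>)) \<and>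
      indicator A \<omega> * (Z t \<omega> - Z s \<omega>) = (\<Sum>k. jump_increment A s t k \<omega>)"
  using AE_non_explosive[of t] AE_space
proof eventually_elim
  case (elim \<omega>)
  define x where "x = sample_of E U \<omega>"
  let ?J = "{jump_count p s x..<jump_count p t x}"
  have "(\<lambda>k. jump_increment A s t k \<omega>) sums (\<Sum>k\<in>?J. jump_increment A s t k \<omega>)"
    by (rule sums_finite) (auto simp: jump_increment_eq[OF elim(2,1) assms(1)] x_def)
  also have "(\<Sum>k\<in>?J. jump_increment A s t k \<omega>) = (\<Sum>k\<in>?J. (p - A_birth p x k) * indicator A \<omega>)"
    by (rule sum.cong) (auto simp: jump_increment_eq[OF elim(2,1) assms(1)] x_def)
  also have "\<dots> = (\<Sum>k\<in>?J. p - A_birth p x k) * indicator A \<omega>"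
    by (rule sum_distrib_right[symmetric])
  also have "\<dots> = indicator A \<omega> * (Z t \<omega> - Z s \<omega>)"
    using balance_population_diff[OF elim(1)[folded x_def] assms(1)]
    by (simp only: Z_def x_def mult.commute)
  finally have "(\<lambda>k. jump_increment A s t k \<omega>) sums (indicator A \<omega> * (Z t \<omega> - Z s \<omega>))" .
  moreover have "summable (\<lambda>k. norm (jump_increment A s t k \<omega>))"
    by (rule summable_finite[of ?J]) (auto simp: jump_increment_eq[OF elim(2,1) assms(1)] x_def)
  ultimately show ?case
    using sums_unique by blast
qed

lemma integral_indicator_Z_diff:
  assumes "s \<le> t" and A: "A \<in> sets (filtration s)"
  shows "(\<integral>\<omega>. indicator A \<omega> * (Z t \<omega> - Z s \<omega>) \<partial>M) = 0"
proof -
  note AE_sums = AE_jump_increment_sums[OF assms(1), of A]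
  have [measurable]: "A \<in> sets M"
    using A sets_filtration_subset by blast
  have [measurable]: "jump_increment A s t k \<in> borel_measurable M" for k
    using integrable_jump_increment[OF A] by (rule borel_measurable_integrable)
  have "(\<integral>\<omega>. indicator A \<omega> * (Z t \<omega> - Z s \<omega>) \<partial>M) = (\<integral>\<omega>. (\<Sum>k. jump_increment A s t k \<omega>) \<partial>M)"
  proof (rule integral_cong_AE)
    show "(\<lambda>\<omega>. indicator A \<omega> * (Z t \<omega> - Z s \<omega>)) \<in> borel_measurable M"
      by measurable
    show "(\<lambda>\<omega>. \<Sum>k. jump_increment A s t k \<omega>) \<in> borel_measurable M"
      by measurable
    show "AE \<omega> in M. indicator A \<omega> * (Z t \<omega> - Z s \<omega>) = (\<Sum>k. jump_increment A s t k \<omega>)"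
      using AE_sums by eventually_elim simp
  qed
  also have "\<dots> = (\<Sum>k. integral\<^sup>L M (jump_increment A s t k))"
    using AE_sums integrable_jump_increment[OF A]
      summable_integral_norm_jump_increment[OF A]
    by (intro integral_suminf) auto
  finally show ?thesis
    by (simp add: integral_jump_increment[OF A])
qed

lemma cond_exp_Z:
  assumes "0 \<le> s" "s \<le> t"
  shows "AE \<omega> in M. real_cond_exp M (filtration s) (Z t) \<omega> = Z s \<omega>"
proof -
  interpret sub: finite_measure_subalgebra M "filtration s"
    by unfold_locales (rule subalgebra_filtration)
  show ?thesis
  proof (rule sub.real_cond_exp_charact)
    fix A assume A: "A \<in> sets (filtration s)"
    then have [measurable]: "A \<in> sets M"
      using sets_filtration_subset by blast
    have "integrable M (\<lambda>\<omega>. indicator A \<omega> * Z r \<omega>)" for r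
      using integrable_mult_indicator[OF _ Z_integrable, of A r] by simp
    then have "(\<integral>\<omega>. indicator A \<omega> * Z t \<omega> \<partial>M) - (\<integral>\<omega>. indicator A \<omega> * Z s \<omega> \<partial>M) =
        (\<integral>\<omega>. indicator A \<omega> * (Z t \<omega> - Z s \<omega>) \<partial>M)"
      by (simp add: right_diff_distrib)
    then show "(\<integral>\<omega>\<in>A. Z t \<omega> \<partial>M) = (\<integral>\<omega>\<in>A. Z s \<omega> \<partial>M)"
      using integral_indicator_Z_diff[OF assms(2) A] by (simp add: set_lebesgue_integral_def)
  qed (auto simp: Z_integrable Z_filtration_measurable[OF assms(1)])
qed

lemma Z_martingale: "ct_martingale M filtration Z"
  unfolding ct_martingale_def
  by (auto simp: subalgebra_filtration Z_integrable Z_filtration_measurable filtration_mono cond_exp_Z)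

lemma AE_population_limits:
  "AE \<omega> in M. ((\<lambda>t. exp (- t) * Z t \<omega>) \<longlongrightarrow> 0) at_top \<and>
    ((\<lambda>t. exp (- t) * real (fst (population p t (sample_of E U \<omega>))))
      \<longlongrightarrow> nA_limit p (sample_of E U \<omega>)) at_top \<and>
    ((\<lambda>t. exp (- t) * real (snd (population p t (sample_of E U \<omega>))))
      \<longlongrightarrow> (1 - p) * nA_limit p (sample_of E U \<omega>) / p) at_top"
  using AE_regular_sample
  by eventually_elim
    (simp add: Z_def regular_sample.balance_tendsto_0 regular_sample.nA_tendsto regular_sample.nB_tendsto)

end

theorem lemma5p2:
  fixes M :: "'a measure" and p q :: real
    and E U :: "nat \<Rightarrow> 'a \<Rightarrow> real"
  assumes "prob_space M"
    and "0 < p" "p \<le> 1" "0 \<le> q" "q \<le> 1"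
    and "\<And>k. distributed M lborel (E k) (exponential_density 1)"
    and "\<And>k. distributed M lborel (U k) (\<lambda>x. indicator {0..1::real} x / measure lborel {0..1::real})"
    and "prob_space.indep_vars M (\<lambda>_. borel)
           (\<lambda>i. case i of Inl k \<Rightarrow> E k | Inr k \<Rightarrow> U k) (UNIV :: (nat + nat) set)"
  shows "ct_martingale M (natural_filtration M (pdbp p q E U))
           (\<lambda>t \<omega>. p * real (nB p q E U t \<omega>) - (1 - p) * real (nA p q E U t \<omega>)) \<and>
         (AE \<omega> in M. ((\<lambda>t. exp (- t) * (p * real (nB p q E U t \<omega>) - (1 - p) * real (nA p q E U t \<omega>)))
                       \<longlongrightarrow> 0) at_top) \<and>
         (\<exists>W. W \<in> borel_measurable M \<and> (AE \<omega> in M. 0 < W \<omega>) \<and>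
             (AE \<omega> in M. ((\<lambda>t. exp (- t) * real (nA p q E U t \<omega>)) \<longlongrightarrow> W \<omega>) at_top) \<and>
             (AE \<omega> in M. ((\<lambda>t. exp (- t) * real (nB p q E U t \<omega>)) \<longlongrightarrow> (1 - p) * W \<omega> / p) at_top))"
proof -
  interpret pdbp_setting M p E U
    using assms by (simp add: pdbp_setting_def pdbp_setting_axioms_def)
  have pdbp: "pdbp p q E U = (\<lambda>t \<omega>. population p t (sample_of E U \<omega>))"
    using assms(2) by (simp add: fun_eq_iff pdbp_eq_population)
  have Z: "p * real (nB p q E U t \<omega>) - (1 - p) * real (nA p q E U t \<omega>) = Z t \<omega>" for t \<omega>
    by (simp add: Z_def balance_def nA_def nB_def pdbp)
  show ?thesis
    unfolding Z unfolding pdbp nA_def nB_def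
  proof (intro conjI exI)
    show "ct_martingale M filtration Z"
      by (rule Z_martingale)
    show "(\<lambda>\<omega>. nA_limit p (sample_of E U \<omega>)) \<in> borel_measurable M"
      by (rule nA_limit_measurable)
    show "AE \<omega> in M. 0 < nA_limit p (sample_of E U \<omega>)"
      by (simp add: nA_limit_def)
  qed (use AE_population_limits in \<open>eventually_elim, simp\<close>)+
qed

end
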